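(* Let $u$ and $v$ be two prime words such that $u<_{lex}v$, and let $\alpha$ be an ordinal such that $u^\alpha v<_{lex}v$. Then the word $u^\alpha v^\beta$ is prime for every ordinal $\beta\ge1$.
   Context: $A$ is a finite alphabet with a linear order $<_A$. Words are sequences of letters indexed by countable ordinals, $x^\alpha$ is the concatenation of $\alpha$ copies of $x$. A suffix of $x$ is $x[\gamma,|x|)$, proper if $0<\gamma<|x|$. Write $x<_{str}x'$ if there are letters $a<_Ab$ and words $y,z,z'$ with $x=yaz$, $x'=ybz'$; $x\le_{lex}x'$ iff $x$ is a prefix of $x'$ or $x<_{str}x'$; $<_{lex}$ is its strict version. A word is primitive if $x=y^\alpha$ implies $\alpha=1$ and $y=x$; $w$ is prime if it is primitive and every proper suffix $z$ satisfies $w\le_{lex}z$. *)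

theory Defs
  imports Main "HOL-Library.Countable_Set"
begin

text \<open>A transfinite word is represented by a well-order on a set of positions
(the field of the relation) together with a labelling of positions by letters.
Words are considered up to label-preserving order isomorphism.\<close>

type_synonym ('p, 'a) word = "'p rel \<times> ('p \<Rightarrow> 'a)"

definition is_word :: "('p, 'a) word \<Rightarrow> bool" where
  "is_word w \<longleftrightarrow> Well_order (fst w)"

definition word_iso :: "('p, 'a) word \<Rightarrow> ('q, 'a) word \<Rightarrow> bool" where
  "word_iso x y \<longleftrightarrow> (\<exists>f. bij_betw f (Field (fst x)) (Field (fst y))
     \<and> (\<forall>i\<in>Field (fst x). \<forall>j\<in>Field (fst x). (i, j) \<in> fst x \<longleftrightarrow> (f i, f j) \<in> fst y)
     \<and> (\<forall>i\<in>Field (fst x). snd y (f i) = snd x i))"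

definition restrict_word :: "('p, 'a) word \<Rightarrow> 'p set \<Rightarrow> ('p, 'a) word" where
  "restrict_word w S = (Restr (fst w) S, snd w)"

definition concat_word :: "('p, 'a) word \<Rightarrow> ('q, 'a) word \<Rightarrow> ('p + 'q, 'a) word" where
  "concat_word x y =
    ({(Inl i, Inl j) | i j. (i, j) \<in> fst x}
     \<union> {(Inr i, Inr j) | i j. (i, j) \<in> fst y}
     \<union> {(Inl i, Inr j) | i j. i \<in> Field (fst x) \<and> j \<in> Field (fst y)},
     case_sum (snd x) (snd y))"

text \<open>Power \<open>x^\<gamma>\<close> for an ordinal \<gamma> given as a well-order: the concatenation of
\<gamma> copies of x, i.e. positions (a, i), ordered first by the block a, then by i.\<close>
definition power_word :: "('p, 'a) word \<Rightarrow> 'r rel \<Rightarrow> ('r \<times> 'p, 'a) word" where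
  "power_word x \<gamma> =
    ({((a, i), (b, j)) | a b i j. a \<in> Field \<gamma> \<and> b \<in> Field \<gamma> \<and>
        i \<in> Field (fst x) \<and> j \<in> Field (fst x) \<and>
        ((a \<noteq> b \<and> (a, b) \<in> \<gamma>) \<or> (a = b \<and> (i, j) \<in> fst x))},
     \<lambda>(a, i). snd x i)"

definition is_prefix :: "('p, 'a) word \<Rightarrow> ('q, 'a) word \<Rightarrow> bool" where
  "is_prefix x x' \<longleftrightarrow> (\<exists>S \<subseteq> Field (fst x').
     (\<forall>i\<in>S. \<forall>j. (j, i) \<in> fst x' \<longrightarrow> j \<in> S) \<and> word_iso x (restrict_word x' S))"

definition below :: "'p rel \<Rightarrow> 'p \<Rightarrow> 'p set" where
  "below r p = {j. (j, p) \<in> r \<and> j \<noteq> p}"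

text \<open>\<open>x <_str x'\<close>: x = y a z, x' = y b z' with a < b.\<close>
definition str_less :: "('p, 'a::linorder) word \<Rightarrow> ('q, 'a) word \<Rightarrow> bool" where
  "str_less x x' \<longleftrightarrow> (\<exists>p\<in>Field (fst x). \<exists>p'\<in>Field (fst x').
     word_iso (restrict_word x (below (fst x) p)) (restrict_word x' (below (fst x') p'))
     \<and> snd x p < snd x' p')"

definition lex_le :: "('p, 'a::linorder) word \<Rightarrow> ('q, 'a) word \<Rightarrow> bool" where
  "lex_le x x' \<longleftrightarrow> is_prefix x x' \<or> str_less x x'"

definition lex_less :: "('p, 'a::linorder) word \<Rightarrow> ('q, 'a) word \<Rightarrow> bool" where
  "lex_less x x' \<longleftrightarrow> lex_le x x' \<and> \<not> word_iso x x'"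

text \<open>Primitive: x = y^\<gamma> implies \<gamma> = 1 and y = x. Any such y, \<gamma> can be realised
on the position type of x, so quantifying over that type is no restriction.\<close>
definition primitive :: "('p, 'a) word \<Rightarrow> bool" where
  "primitive x \<longleftrightarrow> (\<forall>(y :: ('p, 'a) word) (\<gamma> :: 'p rel).
     is_word y \<and> Well_order \<gamma> \<and> word_iso (power_word y \<gamma>) x \<longrightarrow>
     card (Field \<gamma>) = 1 \<and> word_iso y x)"

definition prime_word :: "('p, 'a::linorder) word \<Rightarrow> bool" where
  "prime_word w \<longleftrightarrow> primitive w \<and>
     (\<forall>p\<in>Field (fst w). (\<exists>q\<in>Field (fst w). q \<noteq> p \<and> (q, p) \<in> fst w) \<longrightarrow>
        lex_le w (restrict_word w {j. (p, j) \<in> fst w}))"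

end

theory Submission
  imports Defs
begin

(* Let w = u^\<alpha> v^\<beta>. The hypothesis u^\<alpha> v <lex v is a strict comparison, because a prefix
   of v of the form u^\<alpha> v would be isomorphic to v. A suffix of w starting in v^\<beta> begins with a
   suffix of v, which is lex-greater or equal to v since v is prime; so it is strictly greater
   than u^\<alpha> v and hence than w. A suffix starting in a block of u^\<alpha> is either strictly greater
   than u, hence than w, or (u being prime) it is u^{\<ge>a} v^\<beta> for a final segment of \<alpha>. A final
   segment of an ordinal is isomorphic to an initial one, so u^{\<ge>a} is u^\<alpha> or u^{<a1}, and
   w \<le>lex u^{\<ge>a} v^\<beta> reduces to u^{\<ge>a1} v^\<beta> \<le>lex v^\<beta>; this holds because u^{\<ge>a1} v, whose prefix
   u^{\<ge>a1} is a prefix of u^\<alpha> v, is either strictly smaller than v or isomorphic to it.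
   For primitivity, let w = y^\<gamma> with at least two blocks. If \<gamma> has a last block, the suffix it
   starts is y, a proper prefix of w and hence lex-smaller than w. Otherwise some block starts
   after the beginning of v^\<beta>, and the suffix it starts is again a prefix of w, whereas all
   such suffixes are strictly greater than w. *)

section \<open>Well-orders and embeddings onto initial segments\<close>

lemma Well_order_refl: "Well_order r \<Longrightarrow> i \<in> Field r \<Longrightarrow> (i,i) \<in> r"
  by (auto simp: order_on_defs refl_on_def)

lemma Well_order_trans: "Well_order r \<Longrightarrow> (i,j) \<in> r \<Longrightarrow> (j,k) \<in> r \<Longrightarrow> (i,k) \<in> r"
  by (auto simp: order_on_defs trans_def)

lemma Well_order_antisym: "Well_order r \<Longrightarrow> (i,j) \<in> r \<Longrightarrow> (j,i) \<in> r \<Longrightarrow> i = j"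
  by (auto simp: order_on_defs antisym_def)

lemma Well_order_total: "Well_order r \<Longrightarrow> i \<in> Field r \<Longrightarrow> j \<in> Field r \<Longrightarrow> (i,j) \<in> r \<or> (j,i) \<in> r"
  by (cases "i = j") (auto simp: order_on_defs total_on_def refl_on_def)

lemma Well_order_least: assumes "Well_order r" "S \<subseteq> Field r" "S \<noteq> {}"
  shows "\<exists>m\<in>S. \<forall>s\<in>S. (m,s) \<in> r"
proof -
  have wf: "wf (r - Id)" using assms(1) by (auto simp: well_order_on_def)
  obtain m where m: "m \<in> S" "\<forall>y. (y,m) \<in> r - Id \<longrightarrow> y \<notin> S"
    using wf_eq_minimal[THEN iffD1, OF wf] assms(3) by blast
  have "\<forall>s\<in>S. (m,s) \<in> r"
  proof
    fix s assume "s \<in> S"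
    then show "(m,s) \<in> r" using m Well_order_total[OF assms(1), of m s] assms(2) Well_order_refl[OF assms(1), of m]
      by (cases "s = m") auto
  qed
  then show ?thesis using m by blast
qed

lemma Well_orderI:
  assumes refl: "\<And>x. x \<in> Field r \<Longrightarrow> (x,x) \<in> r" and tr: "trans r" and an: "antisym r"
    and tot: "\<And>x y. x \<in> Field r \<Longrightarrow> y \<in> Field r \<Longrightarrow> (x,y) \<in> r \<or> (y,x) \<in> r"
    and least: "\<And>A. A \<subseteq> Field r \<Longrightarrow> A \<noteq> {} \<Longrightarrow> \<exists>a\<in>A. \<forall>a'\<in>A. (a,a') \<in> r"
  shows "Well_order r"
proof -
  have lo: "Linear_order r"
    unfolding order_on_defs refl_on_def total_on_def
    using refl tr an tot by (auto simp: Field_def)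
  show ?thesis using Linear_order_Well_order_iff[OF lo] least by blast
qed

lemma Field_Restr_Well_order: "Well_order r \<Longrightarrow> S \<subseteq> Field r \<Longrightarrow> Field (Restr r S) = S"
  by (rule Refl_Field_Restr2) (auto simp: order_on_defs)

lemma final_segment_subset: "{b. (a,b) \<in> r} \<subseteq> Field r" by (auto intro: FieldI2)

lemma strict_final_segment_subset: "{b. (a,b) \<in> r \<and> b \<noteq> a} \<subseteq> Field r" by (auto intro: FieldI2)

lemma Restr_final_segment_least: assumes wg: "Well_order \<gamma>" and a0: "\<And>b. b \<in> Field \<gamma> \<Longrightarrow> (a0,b) \<in> \<gamma>"
  shows "Restr \<gamma> {b. (a0,b) \<in> \<gamma>} = \<gamma>"
proof -
  have "{b. (a0,b) \<in> \<gamma>} = Field \<gamma>" using a0 by (auto intro: FieldI2)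
  then show ?thesis by (simp add: Restr_Field)
qed

lemma below_subset_Field: "below r p \<subseteq> Field r" by (auto simp: below_def Field_def)

lemma below_down_closed: "Well_order r \<Longrightarrow> \<forall>i\<in>below r p. \<forall>j. (j,i) \<in> r \<longrightarrow> j \<in> below r p"
proof (intro ballI allI impI)
  fix i j assume wo: "Well_order r" and i: "i \<in> below r p" and j: "(j,i) \<in> r"
  then have "(j,p) \<in> r" using Well_order_trans[OF wo] by (auto simp: below_def)
  moreover have "j \<noteq> p" using Well_order_antisym[OF wo, of i p] i j by (auto simp: below_def)
  ultimately show "j \<in> below r p" by (simp add: below_def)
qed

lemma below_mono: "Well_order r \<Longrightarrow> q \<in> below r p \<Longrightarrow> below r q \<subseteq> below r p"
proof
  fix j assume wo: "Well_order r" and q: "q \<in> below r p" and j: "j \<in> below r q"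
  then have "(j,q) \<in> r" by (simp add: below_def)
  then show "j \<in> below r p" using below_down_closed[OF wo] q by blast
qed

lemma below_inj: assumes "Well_order r" "x \<in> Field r" "y \<in> Field r" "below r x = below r y"
  shows "x = y"
proof (rule ccontr)
  assume "x \<noteq> y"
  have t: "(x,y) \<in> r \<or> (y,x) \<in> r" using Well_order_total[OF assms(1-3)] .
  have "x \<in> below r y \<longleftrightarrow> x \<in> below r x" "y \<in> below r y \<longleftrightarrow> y \<in> below r x" using assms(4) by simp_all
  then show False using t \<open>x \<noteq> y\<close> by (auto simp: below_def)
qed

lemma down_closed_eq_below:
  assumes wg: "Well_order \<gamma>" and E: "E \<subseteq> Field \<gamma>" and dc: "\<forall>i j. i \<in> E \<longrightarrow> (j,i) \<in> \<gamma> \<longrightarrow> j \<in> E"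
    and ne: "E \<noteq> Field \<gamma>"
  shows "\<exists>a1\<in>Field \<gamma>. E = below \<gamma> a1"
proof -
  have "Field \<gamma> - E \<noteq> {}" using E ne by blast
  then obtain m where m: "m \<in> Field \<gamma> - E" and mm: "\<forall>s\<in>Field \<gamma> - E. (m,s) \<in> \<gamma>"
    using Well_order_least[OF wg, of "Field \<gamma> - E"] by blast
  have "E = below \<gamma> m"
  proof
    show "E \<subseteq> below \<gamma> m"
    proof
      fix t assume t: "t \<in> E"
      have "(m,t) \<notin> \<gamma>" using dc t m by blast
      then have "(t,m) \<in> \<gamma>" "t \<noteq> m" using Well_order_total[OF wg] E t m Well_order_refl[OF wg] by blast+
      then show "t \<in> below \<gamma> m" by (simp add: below_def)
    qed
    show "below \<gamma> m \<subseteq> E"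
    proof
      fix t assume t: "t \<in> below \<gamma> m"
      then have tF: "t \<in> Field \<gamma>" using below_subset_Field[of \<gamma> m] by blast
      show "t \<in> E"
      proof (rule ccontr)
        assume "t \<notin> E"
        then have "(m,t) \<in> \<gamma>" using mm tF by blast
        then show False using t Well_order_antisym[OF wg] by (auto simp: below_def)
      qed
    qed
  qed
  then show ?thesis using m by blast
qed

lemma Well_order_inflationary:
  assumes wo: "Well_order r" and fF: "\<forall>i\<in>Field r. f i \<in> Field r"
    and mono: "\<forall>i\<in>Field r. \<forall>j\<in>Field r. (i,j) \<in> r \<longrightarrow> (f i, f j) \<in> r"
    and inj: "inj_on f (Field r)" and i: "i \<in> Field r"
  shows "(i, f i) \<in> r"
proof (rule ccontr)
  assume "(i, f i) \<notin> r"
  then have "{i\<in>Field r. (i, f i) \<notin> r} \<noteq> {}" using i by blast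
  then obtain m where m: "m \<in> Field r" "(m, f m) \<notin> r" and mm: "\<forall>s\<in>{i\<in>Field r. (i, f i) \<notin> r}. (m,s) \<in> r"
    using Well_order_least[OF wo, of "{i\<in>Field r. (i, f i) \<notin> r}"] by blast
  have fm: "(f m, m) \<in> r" "f m \<noteq> m" using Well_order_total[OF wo m(1) fF[rule_format, OF m(1)]] m Well_order_refl[OF wo m(1)] by auto
  have "(f (f m), f m) \<in> r" using mono fm m fF by blast
  moreover have "f (f m) \<noteq> f m" using inj fm fF m by (metis inj_on_def)
  ultimately have "(f m, f (f m)) \<notin> r" using Well_order_antisym[OF wo] by blast
  then have "(m, f m) \<in> r" using mm fF m by blast
  then show False using m by blast
qed

lemma Well_order_inflationary_onto:
  assumes wo: "Well_order r" and S: "S \<subseteq> Field r" and up: "\<forall>s\<in>S. \<forall>t. (s,t) \<in> r \<longrightarrow> t \<in> S"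
    and fS: "f ` Field r \<subseteq> S"
    and mono: "\<forall>i\<in>Field r. \<forall>j\<in>Field r. (i,j) \<in> r \<longrightarrow> (f i, f j) \<in> r"
    and inj: "inj_on f (Field r)"
    and dc: "\<forall>i\<in>Field r. \<forall>j\<in>S. (j, f i) \<in> r \<longrightarrow> j \<in> f ` Field r"
  shows "f ` Field r = S"
proof
  show "f ` Field r \<subseteq> S" by (rule fS)
  show "S \<subseteq> f ` Field r"
  proof
    fix e assume e: "e \<in> S"
    then have eF: "e \<in> Field r" using S by blast
    have "(e, f e) \<in> r" using Well_order_inflationary[OF wo _ mono inj eF] fS S by blast
    then show "e \<in> f ` Field r" using dc eF e by blast
  qed
qed

lemma compat_inj_on_iff:
  assumes wr: "Well_order r" and wr': "Well_order r'" and c: "compat r r' f" and inj: "inj_on f (Field r)"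
    and i: "i \<in> Field r" and j: "j \<in> Field r"
  shows "(i,j) \<in> r \<longleftrightarrow> (f i, f j) \<in> r'"
proof
  assume "(i,j) \<in> r" then show "(f i, f j) \<in> r'" using c by (simp add: compat_def)
next
  assume fij: "(f i, f j) \<in> r'"
  show "(i,j) \<in> r"
  proof (rule ccontr)
    assume nij: "(i,j) \<notin> r"
    then have "(j,i) \<in> r" using Well_order_total[OF wr i j] by blast
    then have "(f j, f i) \<in> r'" using c by (simp add: compat_def)
    then have "f i = f j" using Well_order_antisym[OF wr' fij] by simp
    then have "i = j" using inj i j by (simp add: inj_on_def)
    then show False using nij Well_order_refl[OF wr i] by simp
  qed
qed

lemma embed_final_segment_onto:
  assumes wg: "Well_order \<gamma>" and emb: "embed \<gamma> (Restr \<gamma> {b. (a,b) \<in> \<gamma>}) f"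
  shows "f ` Field \<gamma> = {b. (a,b) \<in> \<gamma>}"
proof -
  let ?G = "{b. (a,b) \<in> \<gamma>}" and ?g = "Restr \<gamma> {b. (a,b) \<in> \<gamma>}"
  have wg': "Well_order ?g" by (rule Well_order_Restr[OF wg])
  have FG: "Field ?g = ?G" by (rule Field_Restr_Well_order[OF wg final_segment_subset])
  have c: "compat \<gamma> ?g f" and inj: "inj_on f (Field \<gamma>)" and of: "wo_rel.ofilter ?g (f ` Field \<gamma>)"
    using emb embed_iff_compat_inj_on_ofilter[OF wg wg'] by auto
  have fG: "f ` Field \<gamma> \<subseteq> ?G" using of FG by (simp add: Order_Relation.ofilter_def)
  show ?thesis
  proof (rule Well_order_inflationary_onto[OF wg final_segment_subset _ fG _ inj])
    show "\<forall>s\<in>?G. \<forall>t. (s, t) \<in> \<gamma> \<longrightarrow> t \<in> ?G" using Well_order_trans[OF wg] by blast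
    show "\<forall>i\<in>Field \<gamma>. \<forall>j\<in>Field \<gamma>. (i, j) \<in> \<gamma> \<longrightarrow> (f i, f j) \<in> \<gamma>"
      using c by (auto simp: compat_def)
    show "\<forall>i\<in>Field \<gamma>. \<forall>j\<in>?G. (j, f i) \<in> \<gamma> \<longrightarrow> j \<in> f ` Field \<gamma>"
    proof (intro ballI impI)
      fix i j assume i: "i \<in> Field \<gamma>" and j: "j \<in> ?G" and ji: "(j, f i) \<in> \<gamma>"
      have "(j, f i) \<in> ?g" using fG i j ji by blast
      moreover have "under ?g (f i) \<subseteq> f ` Field \<gamma>"
        using of i unfolding Order_Relation.ofilter_def by blast
      ultimately show "j \<in> f ` Field \<gamma>" by (auto simp: under_def)
    qed
  qed
qed

lemma final_segment_iso_initial_segment: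
  assumes wg: "Well_order \<gamma>" and a: "a \<in> Field \<gamma>"
  shows "\<exists>e E. E \<subseteq> Field \<gamma> \<and> (\<forall>i j. i \<in> E \<longrightarrow> (j,i) \<in> \<gamma> \<longrightarrow> j \<in> E)
     \<and> bij_betw e {b. (a,b) \<in> \<gamma>} E
     \<and> (\<forall>i\<in>{b. (a,b) \<in> \<gamma>}. \<forall>j\<in>{b. (a,b) \<in> \<gamma>}. (i,j) \<in> \<gamma> \<longleftrightarrow> (e i, e j) \<in> \<gamma>)"
proof -
  let ?G = "{b. (a,b) \<in> \<gamma>}"
  let ?g = "Restr \<gamma> ?G"
  have wg': "Well_order ?g" by (rule Well_order_Restr[OF wg])
  have FG: "Field ?g = ?G" by (rule Field_Restr_Well_order[OF wg final_segment_subset])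
  consider (A) f where "embed ?g \<gamma> f" | (B) f where "embed \<gamma> ?g f" using wellorders_totally_ordered[OF wg' wg] by blast
  then show ?thesis
  proof cases
    case A
    have c: "compat ?g \<gamma> f" and inj: "inj_on f ?G" and of: "wo_rel.ofilter \<gamma> (f ` ?G)"
      using A embed_iff_compat_inj_on_ofilter[OF wg' wg] FG by auto
    have E: "f ` ?G \<subseteq> Field \<gamma>" using of by (simp add: wo_rel.ofilter_def[OF wg[unfolded wo_rel_def[symmetric]]] Order_Relation.ofilter_def)
    have dc: "\<forall>i j. i \<in> f ` ?G \<longrightarrow> (j,i) \<in> \<gamma> \<longrightarrow> j \<in> f ` ?G"
      using of by (auto simp: Order_Relation.ofilter_def under_def)
    have bij: "bij_betw f ?G (f ` ?G)" using inj by (simp add: bij_betw_def)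
    have ord: "\<forall>i\<in>?G. \<forall>j\<in>?G. (i,j) \<in> \<gamma> \<longleftrightarrow> (f i, f j) \<in> \<gamma>"
    proof (intro ballI)
      fix i j assume i: "i \<in> ?G" and j: "j \<in> ?G"
      have "(i,j) \<in> ?g \<longleftrightarrow> (f i, f j) \<in> \<gamma>" using compat_inj_on_iff[OF wg' wg c] inj FG i j by simp
      then show "(i,j) \<in> \<gamma> \<longleftrightarrow> (f i, f j) \<in> \<gamma>" using i j by simp
    qed
    show ?thesis using E dc bij ord by blast
  next
    case B
    have c: "compat \<gamma> ?g f" and inj: "inj_on f (Field \<gamma>)"
      using B embed_iff_compat_inj_on_ofilter[OF wg wg'] by auto
    have ordf: "\<And>i j. i \<in> Field \<gamma> \<Longrightarrow> j \<in> Field \<gamma> \<Longrightarrow> (i,j) \<in> \<gamma> \<longleftrightarrow> (f i, f j) \<in> ?g"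
      using compat_inj_on_iff[OF wg wg' c inj] by blast
    have onto: "f ` Field \<gamma> = ?G" by (rule embed_final_segment_onto[OF wg B])
    have bf: "bij_betw f (Field \<gamma>) ?G" using inj onto by (simp add: bij_betw_def)
    let ?e = "inv_into (Field \<gamma>) f"
    have be: "bij_betw ?e ?G (Field \<gamma>)" by (rule bij_betw_inv_into[OF bf])
    have ord: "\<forall>i\<in>?G. \<forall>j\<in>?G. (i,j) \<in> \<gamma> \<longleftrightarrow> (?e i, ?e j) \<in> \<gamma>"
    proof (intro ballI)
      fix i j assume i: "i \<in> ?G" and j: "j \<in> ?G"
      have ei: "?e i \<in> Field \<gamma>" "f (?e i) = i" using be bf i by (auto intro: bij_betw_apply bij_betw_inv_into_right)
      have ej: "?e j \<in> Field \<gamma>" "f (?e j) = j" using be bf j by (auto intro: bij_betw_apply bij_betw_inv_into_right)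
      show "(i,j) \<in> \<gamma> \<longleftrightarrow> (?e i, ?e j) \<in> \<gamma>" using ordf[OF ei(1) ej(1)] ei ej i j by simp
    qed
    have dc: "\<forall>i j. i \<in> Field \<gamma> \<longrightarrow> (j,i) \<in> \<gamma> \<longrightarrow> j \<in> Field \<gamma>" by (auto intro: FieldI1)
    show ?thesis using dc be ord by blast
  qed
qed

lemma image_comp_eq: "h ` A = B \<Longrightarrow> k ` B = C \<Longrightarrow> (k \<circ> h) ` A = C"
  by (simp only: image_comp[symmetric])

definition init_emb :: "'p rel \<Rightarrow> 'q rel \<Rightarrow> 'p set \<Rightarrow> ('p \<Rightarrow> 'q) \<Rightarrow> bool" where
  "init_emb r r' A f \<longleftrightarrow> inj_on f A \<and> f ` A \<subseteq> Field r' \<and> A \<subseteq> Field r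
     \<and> (\<forall>i\<in>A. \<forall>j\<in>A. (i,j) \<in> r \<longleftrightarrow> (f i, f j) \<in> r')
     \<and> (\<forall>i\<in>A. \<forall>j. (j,i) \<in> r \<longrightarrow> j \<in> A)
     \<and> (\<forall>i\<in>A. \<forall>j. (j, f i) \<in> r' \<longrightarrow> j \<in> f ` A)"

lemma init_emb_D:
  assumes "init_emb r r' A f"
  shows init_emb_inj: "inj_on f A" and init_emb_image: "f ` A \<subseteq> Field r'" and init_emb_subset: "A \<subseteq> Field r"
    and init_emb_ord: "\<And>i j. i \<in> A \<Longrightarrow> j \<in> A \<Longrightarrow> (i,j) \<in> r \<longleftrightarrow> (f i, f j) \<in> r'"
    and init_emb_down_closed: "\<And>i j. i \<in> A \<Longrightarrow> (j,i) \<in> r \<Longrightarrow> j \<in> A"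
    and init_emb_image_down_closed: "\<And>i j. i \<in> A \<Longrightarrow> (j, f i) \<in> r' \<Longrightarrow> j \<in> f ` A"
  using assms unfolding init_emb_def by blast+

lemma init_emb_below:
  assumes wo: "Well_order r" "Well_order r'" and P: "init_emb r r' A f" and a: "a \<in> A"
  shows "f ` below r a = below r' (f a)"
proof
  show "f ` below r a \<subseteq> below r' (f a)"
  proof
    fix t assume "t \<in> f ` below r a"
    then obtain j where j: "j \<in> below r a" "t = f j" by blast
    have jA: "j \<in> A" using init_emb_down_closed[OF P a] j by (auto simp: below_def)
    have "(f j, f a) \<in> r'" using init_emb_ord[OF P jA a] j by (auto simp: below_def)
    moreover have "f j \<noteq> f a" using inj_onD[OF init_emb_inj[OF P] _ jA a] j by (auto simp: below_def)
    ultimately show "t \<in> below r' (f a)" using j by (simp add: below_def)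
  qed
next
  show "below r' (f a) \<subseteq> f ` below r a"
  proof
    fix t assume t: "t \<in> below r' (f a)"
    then have "t \<in> f ` A" using init_emb_image_down_closed[OF P a] by (auto simp: below_def)
    then obtain j where j: "j \<in> A" "t = f j" by blast
    have "(j,a) \<in> r" using init_emb_ord[OF P j(1) a] j t by (auto simp: below_def)
    moreover have "j \<noteq> a" using j t by (auto simp: below_def)
    ultimately show "t \<in> f ` below r a" using j by (auto simp: below_def)
  qed
qed

lemma init_emb_unique:
  assumes wo: "Well_order r" "Well_order r'" and P: "init_emb r r' A f" and Q: "init_emb r r' A g" and a: "a \<in> A"
  shows "f a = g a"
proof -
  have wf: "wf (r - Id)" using wo(1) by (auto simp: well_order_on_def)
  have "a \<in> A \<longrightarrow> f a = g a"
  proof (induction a rule: wf_induct[OF wf])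
    case (1 a)
    show ?case
    proof
      assume aA: "a \<in> A"
      have "\<forall>j\<in>below r a. f j = g j"
      proof
        fix j assume j: "j \<in> below r a"
        then have "(j,a) \<in> r - Id" by (auto simp: below_def)
        moreover have "j \<in> A" using init_emb_down_closed[OF P aA] j by (auto simp: below_def)
        ultimately show "f j = g j" using 1 by blast
      qed
      then have "f ` below r a = g ` below r a" by (intro image_cong) auto
      then have e: "below r' (f a) = below r' (g a)" using init_emb_below[OF wo P aA] init_emb_below[OF wo Q aA] by simp
      have fa: "f a \<in> Field r'" using init_emb_image[OF P] aA by blast
      have ga: "g a \<in> Field r'" using init_emb_image[OF Q] aA by blast
      show "f a = g a" by (rule below_inj[OF wo(2) fa ga e])
    qed
  qed
  then show ?thesis using a by blast
qed

lemma init_emb_comp: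
  assumes P: "init_emb r r' A f" and Q: "init_emb r' r'' B g" and sub: "f ` A \<subseteq> B"
  shows "init_emb r r'' A (g \<circ> f)"
  unfolding init_emb_def
proof (intro conjI)
  show "inj_on (g \<circ> f) A" using init_emb_inj[OF P] init_emb_inj[OF Q] sub by (meson comp_inj_on inj_on_subset)
  show "(g \<circ> f) ` A \<subseteq> Field r''" using init_emb_image[OF Q] sub by auto
  show "A \<subseteq> Field r" using init_emb_subset[OF P] by auto
  show "\<forall>i\<in>A. \<forall>j\<in>A. ((i, j) \<in> r) = (((g \<circ> f) i, (g \<circ> f) j) \<in> r'')"
  proof (intro ballI)
    fix i j assume "i \<in> A" "j \<in> A"
    moreover then have "f i \<in> B" "f j \<in> B" using sub by auto
    ultimately show "((i, j) \<in> r) = (((g \<circ> f) i, (g \<circ> f) j) \<in> r'')"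
      using init_emb_ord[OF P] init_emb_ord[OF Q] by simp
  qed
  show "\<forall>i\<in>A. \<forall>j. (j, i) \<in> r \<longrightarrow> j \<in> A" using init_emb_down_closed[OF P] by blast
  show "\<forall>i\<in>A. \<forall>j. (j, (g \<circ> f) i) \<in> r'' \<longrightarrow> j \<in> (g \<circ> f) ` A"
  proof (intro ballI allI impI)
    fix i j assume i: "i \<in> A" and j: "(j, (g \<circ> f) i) \<in> r''"
    have fiB: "f i \<in> B" using sub i by blast
    then obtain k where k: "k \<in> B" "j = g k" using init_emb_image_down_closed[OF Q fiB] j by auto
    have "(k, f i) \<in> r'" using init_emb_ord[OF Q k(1) fiB] k j by auto
    then obtain l where l: "l \<in> A" "k = f l" using init_emb_image_down_closed[OF P i] by blast
    show "j \<in> (g \<circ> f) ` A" using k l by auto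
  qed
qed

lemma init_emb_restrict:
  assumes P: "init_emb r r' A f" and B: "B \<subseteq> A" and dc: "\<forall>i\<in>B. \<forall>j. (j,i) \<in> r \<longrightarrow> j \<in> B"
  shows "init_emb r r' B f"
  unfolding init_emb_def
proof (intro conjI)
  show "inj_on f B" using init_emb_inj[OF P] B by (meson inj_on_subset)
  show "f ` B \<subseteq> Field r'" "B \<subseteq> Field r" using init_emb_image[OF P] init_emb_subset[OF P] B by auto
  show "\<forall>i\<in>B. \<forall>j\<in>B. ((i, j) \<in> r) = ((f i, f j) \<in> r')" using init_emb_ord[OF P] B by blast
  show "\<forall>i\<in>B. \<forall>j. (j, i) \<in> r \<longrightarrow> j \<in> B" by (rule dc)
  show "\<forall>i\<in>B. \<forall>j. (j, f i) \<in> r' \<longrightarrow> j \<in> f ` B"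
  proof (intro ballI allI impI)
    fix i j assume i: "i \<in> B" and j: "(j, f i) \<in> r'"
    then obtain l where l: "l \<in> A" "j = f l" using init_emb_image_down_closed[OF P] B by blast
    have "(l, i) \<in> r" using init_emb_ord[OF P l(1)] l i j B by blast
    then show "j \<in> f ` B" using dc i l by blast
  qed
qed

lemma init_emb_inv:
  assumes P: "init_emb r r' A f"
  shows "init_emb r' r (f ` A) (inv_into A f)"
  unfolding init_emb_def
proof (intro conjI)
  have inj: "inj_on f A" by (rule init_emb_inj[OF P])
  show "inj_on (inv_into A f) (f ` A)" by (rule inj_on_inv_into) simp
  show "inv_into A f ` f ` A \<subseteq> Field r" using init_emb_subset[OF P] inj by simp
  show "f ` A \<subseteq> Field r'" by (rule init_emb_image[OF P])
  show "\<forall>i\<in>f ` A. \<forall>j\<in>f ` A. ((i, j) \<in> r') = ((inv_into A f i, inv_into A f j) \<in> r)"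
    using init_emb_ord[OF P] inj by auto
  show "\<forall>i\<in>f ` A. \<forall>j. (j, i) \<in> r' \<longrightarrow> j \<in> f ` A" using init_emb_image_down_closed[OF P] by blast
  show "\<forall>i\<in>f ` A. \<forall>j. (j, inv_into A f i) \<in> r \<longrightarrow> j \<in> inv_into A f ` f ` A"
    using init_emb_down_closed[OF P] inj by auto
qed

section \<open>Isomorphisms and prefixes of words\<close>

abbreviation pos :: "('p,'a) word \<Rightarrow> 'p set" where "pos x \<equiv> Field (fst x)"

abbreviation suffix_from :: "('p,'a) word \<Rightarrow> 'p \<Rightarrow> ('p,'a) word" where
  "suffix_from x m \<equiv> restrict_word x {j. (m, j) \<in> fst x}"

abbreviation prefix_before :: "('p,'a) word \<Rightarrow> 'p \<Rightarrow> ('p,'a) word" where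
  "prefix_before x m \<equiv> restrict_word x (below (fst x) m)"

lemma restrict_word_simps[simp]:
  "(i,j) \<in> fst (restrict_word x S) \<longleftrightarrow> (i,j) \<in> fst x \<and> i \<in> S \<and> j \<in> S"
  "snd (restrict_word x S) = snd x"
  by (auto simp: restrict_word_def)

lemma is_word_restrict: "is_word x \<Longrightarrow> is_word (restrict_word x S)"
  by (simp add: is_word_def restrict_word_def Well_order_Restr)

lemma pos_restrict: "is_word x \<Longrightarrow> S \<subseteq> pos x \<Longrightarrow> pos (restrict_word x S) = S"
  by (simp add: is_word_def restrict_word_def Field_Restr_Well_order)

lemma suffix_from_subset: "{j. (m, j) \<in> fst x} \<subseteq> pos x" by (auto simp: Field_def)

lemma pos_suffix_from: "is_word x \<Longrightarrow> pos (suffix_from x m) = {j. (m,j) \<in> fst x}"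
  by (rule pos_restrict[OF _ suffix_from_subset])

lemma pos_prefix_before: "is_word x \<Longrightarrow> pos (prefix_before x m) = below (fst x) m"
  by (rule pos_restrict[OF _ below_subset_Field])

lemma suffix_from_least: assumes "\<And>i. i \<in> pos x \<Longrightarrow> (j0, i) \<in> fst x"
  shows "suffix_from x j0 = x"
proof -
  have "{j. (j0, j) \<in> fst x} = pos x" using assms by (auto intro: FieldI2)
  then show ?thesis by (simp add: restrict_word_def Restr_Field)
qed

definition iso_map :: "('p,'a) word \<Rightarrow> ('q,'a) word \<Rightarrow> ('p \<Rightarrow> 'q) \<Rightarrow> bool" where
  "iso_map x y f \<longleftrightarrow> bij_betw f (pos x) (pos y)
     \<and> (\<forall>i\<in>pos x. \<forall>j\<in>pos x. (i, j) \<in> fst x \<longleftrightarrow> (f i, f j) \<in> fst y)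
     \<and> (\<forall>i\<in>pos x. snd y (f i) = snd x i)"

lemma word_iso_iff_iso_map: "word_iso x y \<longleftrightarrow> (\<exists>f. iso_map x y f)"
  unfolding word_iso_def iso_map_def by blast

definition prefix_map :: "('p,'a) word \<Rightarrow> ('q,'a) word \<Rightarrow> ('p \<Rightarrow> 'q) \<Rightarrow> bool" where
  "prefix_map x y f \<longleftrightarrow> inj_on f (pos x) \<and> f ` pos x \<subseteq> pos y
     \<and> (\<forall>i\<in>pos x. \<forall>j\<in>pos x. (i, j) \<in> fst x \<longleftrightarrow> (f i, f j) \<in> fst y)
     \<and> (\<forall>i\<in>pos x. \<forall>j. (j, f i) \<in> fst y \<longrightarrow> j \<in> f ` pos x)
     \<and> (\<forall>i\<in>pos x. snd y (f i) = snd x i)"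

lemma is_prefix_iff_prefix_map: assumes "is_word y" shows "is_prefix x y \<longleftrightarrow> (\<exists>f. prefix_map x y f)"
proof
  assume "is_prefix x y"
  then obtain S f where S: "S \<subseteq> pos y" "\<forall>i\<in>S. \<forall>j. (j, i) \<in> fst y \<longrightarrow> j \<in> S"
    and f: "iso_map x (restrict_word y S) f" unfolding is_prefix_def word_iso_iff_iso_map by blast
  have FS: "Field (Restr (fst y) S) = S" using Field_Restr_Well_order assms S by (auto simp: is_word_def)
  have "prefix_map x y f"
    using f S FS unfolding prefix_map_def iso_map_def restrict_word_def bij_betw_def by auto
  then show "\<exists>f. prefix_map x y f" by blast
next
  assume "\<exists>f. prefix_map x y f"
  then obtain f where f: "prefix_map x y f" by blast
  let ?S = "f ` pos x"
  have FS: "Field (Restr (fst y) ?S) = ?S" using Field_Restr_Well_order assms f by (auto simp: is_word_def prefix_map_def)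
  have "iso_map x (restrict_word y ?S) f"
    using f FS unfolding prefix_map_def iso_map_def restrict_word_def bij_betw_def by auto
  moreover have "\<forall>i\<in>?S. \<forall>j. (j, i) \<in> fst y \<longrightarrow> j \<in> ?S" using f unfolding prefix_map_def by blast
  ultimately show "is_prefix x y" unfolding is_prefix_def word_iso_iff_iso_map using f
    by (auto simp: prefix_map_def)
qed

lemma prefix_map_iff_init_emb: "prefix_map x y f \<longleftrightarrow> init_emb (fst x) (fst y) (pos x) f \<and> (\<forall>i\<in>pos x. snd y (f i) = snd x i)"
  unfolding prefix_map_def init_emb_def by (auto simp: Field_def)

lemma iso_map_D: assumes "iso_map x y f"
  shows iso_map_in: "\<And>a. a \<in> pos x \<Longrightarrow> f a \<in> pos y"
   and iso_map_inv_in: "\<And>b. b \<in> pos y \<Longrightarrow> inv_into (pos x) f b \<in> pos x"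
   and iso_map_inv_left: "\<And>a. a \<in> pos x \<Longrightarrow> inv_into (pos x) f (f a) = a"
   and iso_map_inv_right: "\<And>b. b \<in> pos y \<Longrightarrow> f (inv_into (pos x) f b) = b"
   and iso_map_ord: "\<And>i j. i \<in> pos x \<Longrightarrow> j \<in> pos x \<Longrightarrow> (i,j) \<in> fst x \<longleftrightarrow> (f i, f j) \<in> fst y"
   and iso_map_label: "\<And>i. i \<in> pos x \<Longrightarrow> snd y (f i) = snd x i"
proof -
  have b: "bij_betw f (pos x) (pos y)" using assms by (simp add: iso_map_def)
  show "\<And>a. a \<in> pos x \<Longrightarrow> f a \<in> pos y" using b by (meson bij_betw_apply)
  show "\<And>b. b \<in> pos y \<Longrightarrow> inv_into (pos x) f b \<in> pos x" using bij_betw_inv_into[OF b] by (meson bij_betw_apply)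
  show "\<And>a. a \<in> pos x \<Longrightarrow> inv_into (pos x) f (f a) = a" using b by (meson bij_betw_inv_into_left)
  show "\<And>b. b \<in> pos y \<Longrightarrow> f (inv_into (pos x) f b) = b" using b by (meson bij_betw_inv_into_right)
  show "\<And>i j. i \<in> pos x \<Longrightarrow> j \<in> pos x \<Longrightarrow> (i,j) \<in> fst x \<longleftrightarrow> (f i, f j) \<in> fst y" using assms by (simp add: iso_map_def)
  show "\<And>i. i \<in> pos x \<Longrightarrow> snd y (f i) = snd x i" using assms by (simp add: iso_map_def)
qed

lemma iso_map_id: "iso_map x x id"
  unfolding iso_map_def by auto

lemma iso_map_inv: assumes "iso_map x y f" shows "iso_map y x (inv_into (pos x) f)"
proof -
  have b: "bij_betw f (pos x) (pos y)" using assms by (simp add: iso_map_def)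
  have bi: "bij_betw (inv_into (pos x) f) (pos y) (pos x)" by (rule bij_betw_inv_into[OF b])
  have ff: "\<And>i. i \<in> pos y \<Longrightarrow> f (inv_into (pos x) f i) = i" using b by (meson bij_betw_inv_into_right)
  have fi: "\<And>i. i \<in> pos y \<Longrightarrow> inv_into (pos x) f i \<in> pos x" using bi by (meson bij_betw_apply)
  show ?thesis unfolding iso_map_def
  proof (intro conjI bi ballI)
    fix i j assume "i \<in> pos y" "j \<in> pos y"
    then show "((i, j) \<in> fst y) = ((inv_into (pos x) f i, inv_into (pos x) f j) \<in> fst x)"
      using assms fi ff unfolding iso_map_def by metis
  next
    fix i assume "i \<in> pos y"
    then show "snd x (inv_into (pos x) f i) = snd y i" using assms fi ff unfolding iso_map_def by metis
  qed
qed

lemma iso_map_comp: assumes "iso_map x y f" "iso_map y z g" shows "iso_map x z (g \<circ> f)"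
proof -
  have b: "bij_betw f (pos x) (pos y)" "bij_betw g (pos y) (pos z)" using assms by (simp_all add: iso_map_def)
  have fi: "\<And>i. i \<in> pos x \<Longrightarrow> f i \<in> pos y" using b by (meson bij_betw_apply)
  show ?thesis unfolding iso_map_def
  proof (intro conjI ballI)
    show "bij_betw (g \<circ> f) (pos x) (pos z)" using b by (rule bij_betw_trans)
  next
    fix i j assume "i \<in> pos x" "j \<in> pos x"
    then show "((i, j) \<in> fst x) = (((g \<circ> f) i, (g \<circ> f) j) \<in> fst z)"
      using assms fi unfolding iso_map_def by simp
  next
    fix i assume "i \<in> pos x"
    then show "snd z ((g \<circ> f) i) = snd x i" using assms fi unfolding iso_map_def by simp
  qed
qed

lemma iso_map_prefix_map: assumes "iso_map x y f" shows "prefix_map x y f"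
proof -
  have b: "bij_betw f (pos x) (pos y)" using assms by (simp add: iso_map_def)
  show ?thesis unfolding prefix_map_def
  proof (intro conjI ballI allI impI)
    show "inj_on f (pos x)" using b by (simp add: bij_betw_def)
    show "f ` pos x \<subseteq> pos y" using b by (simp add: bij_betw_def)
  next
    fix i j assume "i \<in> pos x" "j \<in> pos x"
    then show "((i, j) \<in> fst x) = ((f i, f j) \<in> fst y)" using assms unfolding iso_map_def by simp
  next
    fix i j assume "i \<in> pos x" "(j, f i) \<in> fst y"
    then have "j \<in> pos y" by (auto simp: Field_def)
    then show "j \<in> f ` pos x" using b by (simp add: bij_betw_def)
  next
    fix i assume "i \<in> pos x"
    then show "snd y (f i) = snd x i" using assms unfolding iso_map_def by simp
  qed
qed

lemma prefix_map_D:
  assumes "prefix_map x y f"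
  shows prefix_map_init_emb: "init_emb (fst x) (fst y) (pos x) f"
    and prefix_map_label: "\<And>i. i \<in> pos x \<Longrightarrow> snd y (f i) = snd x i"
  using assms unfolding prefix_map_iff_init_emb by blast+

lemma prefix_map_comp: assumes "prefix_map x y f" "prefix_map y z g" shows "prefix_map x z (g \<circ> f)"
proof -
  have "init_emb (fst x) (fst z) (pos x) (g \<circ> f)"
    using init_emb_comp[OF prefix_map_init_emb[OF assms(1)] prefix_map_init_emb[OF assms(2)] init_emb_image[OF prefix_map_init_emb[OF assms(1)]]] .
  moreover have "\<forall>i\<in>pos x. snd z ((g \<circ> f) i) = snd x i"
    using prefix_map_label[OF assms(1)] prefix_map_label[OF assms(2)] init_emb_image[OF prefix_map_init_emb[OF assms(1)]] by auto
  ultimately show ?thesis unfolding prefix_map_iff_init_emb by blast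
qed

lemma prefix_map_onto: assumes "prefix_map x y f" "f ` pos x = pos y" shows "iso_map x y f"
  using assms unfolding prefix_map_def iso_map_def bij_betw_def by blast

lemma prefix_map_below: assumes "is_word x" "is_word y" "prefix_map x y f" "p \<in> pos x"
  shows "f ` below (fst x) p = below (fst y) (f p)"
  using init_emb_below[OF _ _ prefix_map_init_emb[OF assms(3)] assms(4)] assms(1,2) by (simp add: is_word_def)

lemma prefix_map_suffix_from_iso_map:
  assumes wx: "is_word x" and m: "m \<in> pos x" and f: "prefix_map x (suffix_from x m) f"
  shows "iso_map x (suffix_from x m) f"
proof -
  let ?S = "{j. (m, j) \<in> fst x}"
  have wo: "Well_order (fst x)" using wx by (simp add: is_word_def)
  have PS: "pos (suffix_from x m) = ?S" using pos_restrict[OF wx suffix_from_subset] .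
  have F: "init_emb (fst x) (Restr (fst x) ?S) (pos x) f" using prefix_map_init_emb[OF f] by (simp add: restrict_word_def)
  have fS: "f ` pos x \<subseteq> ?S" using init_emb_image[OF F] PS by (simp add: restrict_word_def)
  have "f ` pos x = ?S"
  proof (rule Well_order_inflationary_onto[OF wo suffix_from_subset _ fS])
    show "\<forall>s\<in>?S. \<forall>t. (s, t) \<in> fst x \<longrightarrow> t \<in> ?S" using Well_order_trans[OF wo] by blast
    show "\<forall>i\<in>pos x. \<forall>j\<in>pos x. (i, j) \<in> fst x \<longrightarrow> (f i, f j) \<in> fst x" using init_emb_ord[OF F] by blast
    show "inj_on f (pos x)" by (rule init_emb_inj[OF F])
    show "\<forall>i\<in>pos x. \<forall>j\<in>?S. (j, f i) \<in> fst x \<longrightarrow> j \<in> f ` pos x"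
    proof (intro ballI impI)
      fix i j assume i: "i \<in> pos x" and j: "j \<in> ?S" and ji: "(j, f i) \<in> fst x"
      have "f i \<in> ?S" using fS i by blast
      then have "(j, f i) \<in> Restr (fst x) ?S" using j ji by blast
      then show "j \<in> f ` pos x" using init_emb_image_down_closed[OF F i] by blast
    qed
  qed
  then show ?thesis using prefix_map_onto[OF f] PS by simp
qed

lemma prefix_map_self_onto:
  assumes wx: "is_word x" and f: "prefix_map x x f"
  shows "f ` pos x = pos x"
proof -
  have wo: "Well_order (fst x)" using wx by (simp add: is_word_def)
  have F: "init_emb (fst x) (fst x) (pos x) f" by (rule prefix_map_init_emb[OF f])
  show ?thesis
  proof (rule Well_order_inflationary_onto[OF wo subset_refl])
    show "\<forall>s\<in>pos x. \<forall>t. (s, t) \<in> fst x \<longrightarrow> t \<in> pos x" by (auto simp: Field_def)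
    show "f ` pos x \<subseteq> pos x" by (rule init_emb_image[OF F])
    show "\<forall>i\<in>pos x. \<forall>j\<in>pos x. (i, j) \<in> fst x \<longrightarrow> (f i, f j) \<in> fst x" using init_emb_ord[OF F] by blast
    show "inj_on f (pos x)" by (rule init_emb_inj[OF F])
    show "\<forall>i\<in>pos x. \<forall>j\<in>pos x. (j, f i) \<in> fst x \<longrightarrow> j \<in> f ` pos x" using init_emb_image_down_closed[OF F] by blast
  qed
qed

lemma prefix_map_antisym:
  assumes wx: "is_word x" and wy: "is_word y" and f: "prefix_map x y f" and g: "prefix_map y x g"
  shows "iso_map x y f"
proof -
  have "(f \<circ> g) ` pos y = pos y" by (rule prefix_map_self_onto[OF wy prefix_map_comp[OF g f]])
  then have "f ` g ` pos y = pos y" by (simp add: image_comp)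
  moreover have "f ` g ` pos y \<subseteq> f ` pos x" using init_emb_image[OF prefix_map_init_emb[OF g]] by (rule image_mono)
  ultimately have "pos y \<subseteq> f ` pos x" by simp
  then have "f ` pos x = pos y" using init_emb_image[OF prefix_map_init_emb[OF f]] by blast
  then show ?thesis by (rule prefix_map_onto[OF f])
qed

lemma prefix_map_not_onto:
  assumes wP: "is_word P" and wv: "is_word v" and g: "prefix_map P v g" and no: "g ` pos P \<noteq> pos v"
  shows "\<exists>m\<in>pos v. g ` pos P = below (fst v) m \<and> iso_map P (prefix_before v m) g"
proof -
  have wo: "Well_order (fst v)" using wv by (simp add: is_word_def)
  have G: "init_emb (fst P) (fst v) (pos P) g" by (rule prefix_map_init_emb[OF g])
  have "pos v - g ` pos P \<noteq> {}" using no init_emb_image[OF G] by blast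
  then obtain m where m: "m \<in> pos v - g ` pos P" and mm: "\<forall>s\<in>pos v - g ` pos P. (m,s) \<in> fst v"
    using Well_order_least[OF wo, of "pos v - g ` pos P"] by blast
  have img: "g ` pos P = below (fst v) m"
  proof
    show "g ` pos P \<subseteq> below (fst v) m"
    proof
      fix t assume t: "t \<in> g ` pos P"
      then obtain a where a: "a \<in> pos P" "t = g a" by blast
      have tv: "t \<in> pos v" using init_emb_image[OF G] t by blast
      have "(m, t) \<notin> fst v" using init_emb_image_down_closed[OF G a(1)] a(2) m by blast
      then have "(t, m) \<in> fst v" "t \<noteq> m" using Well_order_total[OF wo tv] m Well_order_refl[OF wo tv] by auto
      then show "t \<in> below (fst v) m" by (simp add: below_def)
    qed
    show "below (fst v) m \<subseteq> g ` pos P"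
    proof
      fix t assume t: "t \<in> below (fst v) m"
      then have tv: "t \<in> pos v" using below_subset_Field[of "fst v" m] by blast
      show "t \<in> g ` pos P"
      proof (rule ccontr)
        assume "t \<notin> g ` pos P"
        then have "(m, t) \<in> fst v" using mm tv by blast
        then show False using t Well_order_antisym[OF wo] by (auto simp: below_def)
      qed
    qed
  qed
  have Pm: "pos (prefix_before v m) = below (fst v) m" using pos_restrict[OF wv below_subset_Field] .
  have "prefix_map P (prefix_before v m) g" unfolding prefix_map_def
  proof (intro conjI ballI allI impI)
    show "inj_on g (pos P)" by (rule init_emb_inj[OF G])
    show "g ` pos P \<subseteq> pos (prefix_before v m)" using img Pm by simp
  next
    fix i j assume ij: "i \<in> pos P" "j \<in> pos P"
    then have "g i \<in> below (fst v) m" "g j \<in> below (fst v) m" using img by (metis imageI)+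
    then show "((i, j) \<in> fst P) = ((g i, g j) \<in> fst (prefix_before v m))" using init_emb_ord[OF G ij]
      by (simp add: restrict_word_def)
  next
    fix i j assume "i \<in> pos P" "(j, g i) \<in> fst (prefix_before v m)"
    then show "j \<in> g ` pos P" using img by (auto simp: restrict_word_def)
  next
    fix i assume "i \<in> pos P"
    then show "snd (prefix_before v m) (g i) = snd P i" using prefix_map_label[OF g] by (simp add: restrict_word_def)
  qed
  then have "iso_map P (prefix_before v m) g" using prefix_map_onto img Pm by metis
  then show ?thesis using img m by blast
qed

lemma word_isoI:
  assumes f: "\<And>a. a \<in> pos x \<Longrightarrow> f a \<in> pos y" and g: "\<And>b. b \<in> pos y \<Longrightarrow> g b \<in> pos x"
    and gf: "\<And>a. a \<in> pos x \<Longrightarrow> g (f a) = a" and fg: "\<And>b. b \<in> pos y \<Longrightarrow> f (g b) = b"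
    and ord: "\<And>i j. i \<in> pos x \<Longrightarrow> j \<in> pos x \<Longrightarrow> (i,j) \<in> fst x \<longleftrightarrow> (f i, f j) \<in> fst y"
    and lab: "\<And>i. i \<in> pos x \<Longrightarrow> snd y (f i) = snd x i"
  shows "word_iso x y"
proof -
  have "bij_betw f (pos x) (pos y)"
    by (rule bij_betw_byWitness[where f'=g]) (use f g gf fg in auto)
  then have "iso_map x y f" unfolding iso_map_def using ord lab by blast
  then show ?thesis using word_iso_iff_iso_map by blast
qed

lemma is_prefixI:
  assumes wy: "is_word y" and inj: "inj_on f (pos x)" and f: "\<And>a. a \<in> pos x \<Longrightarrow> f a \<in> pos y"
    and ord: "\<And>i j. i \<in> pos x \<Longrightarrow> j \<in> pos x \<Longrightarrow> (i,j) \<in> fst x \<longleftrightarrow> (f i, f j) \<in> fst y"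
    and dc: "\<And>i j. i \<in> pos x \<Longrightarrow> (j, f i) \<in> fst y \<Longrightarrow> j \<in> f ` pos x"
    and lab: "\<And>i. i \<in> pos x \<Longrightarrow> snd y (f i) = snd x i"
  shows "is_prefix x y"
proof -
  have "prefix_map x y f" unfolding prefix_map_def using assms by blast
  then show ?thesis using is_prefix_iff_prefix_map[OF wy] by blast
qed

lemma word_iso_refl: "word_iso x x" using iso_map_id word_iso_iff_iso_map by blast

lemma word_iso_sym: "word_iso x y \<Longrightarrow> word_iso y x" unfolding word_iso_iff_iso_map using iso_map_inv by blast

lemma word_iso_trans: "word_iso x y \<Longrightarrow> word_iso y z \<Longrightarrow> word_iso x z" unfolding word_iso_iff_iso_map using iso_map_comp by blast

lemma is_prefix_refl: "is_word x \<Longrightarrow> is_prefix x x"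
  using is_prefix_iff_prefix_map iso_map_prefix_map[OF iso_map_id] by blast

lemma is_prefix_trans: assumes "is_word y" "is_word z" "is_prefix x y" "is_prefix y z" shows "is_prefix x z"
proof -
  obtain f where f: "prefix_map x y f" using assms(3) is_prefix_iff_prefix_map[OF assms(1)] by blast
  obtain g where g: "prefix_map y z g" using assms(4) is_prefix_iff_prefix_map[OF assms(2)] by blast
  show ?thesis using prefix_map_comp[OF f g] is_prefix_iff_prefix_map[OF assms(2)] by blast
qed

lemma word_iso_imp_is_prefix: assumes "is_word y" "word_iso x y" shows "is_prefix x y"
proof -
  obtain f where "iso_map x y f" using assms(2) word_iso_iff_iso_map by blast
  then show ?thesis using iso_map_prefix_map is_prefix_iff_prefix_map[OF assms(1)] by blast
qed

lemma is_prefix_iso_left: "is_word x \<Longrightarrow> is_word y \<Longrightarrow> word_iso x' x \<Longrightarrow> is_prefix x y \<Longrightarrow> is_prefix x' y"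
  using is_prefix_trans word_iso_imp_is_prefix by blast

lemma is_prefix_iso_right: "is_word y \<Longrightarrow> is_word y' \<Longrightarrow> is_prefix x y \<Longrightarrow> word_iso y y' \<Longrightarrow> is_prefix x y'"
  using is_prefix_trans word_iso_imp_is_prefix by blast

lemma is_prefix_antisym: assumes "is_word x" "is_word y" "is_prefix x y" "is_prefix y x" shows "word_iso x y"
proof -
  obtain f where f: "prefix_map x y f" using assms(3) is_prefix_iff_prefix_map[OF assms(2)] by blast
  obtain g where g: "prefix_map y x g" using assms(4) is_prefix_iff_prefix_map[OF assms(1)] by blast
  show ?thesis using prefix_map_antisym[OF assms(1,2) f g] word_iso_iff_iso_map by blast
qed

lemma is_prefix_suffix_from_imp_iso: assumes "is_word x" "m \<in> pos x" "is_prefix x (suffix_from x m)" shows "word_iso x (suffix_from x m)"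
proof -
  obtain f where f: "prefix_map x (suffix_from x m) f" using assms(3) is_prefix_iff_prefix_map[OF is_word_restrict[OF assms(1)]] by blast
  show ?thesis using prefix_map_suffix_from_iso_map[OF assms(1,2) f] word_iso_iff_iso_map by blast
qed

lemma suffix_from_iso_map: assumes wx: "is_word x" and wx': "is_word x'" and f: "iso_map x x' f" and p: "p \<in> pos x"
  shows "word_iso (suffix_from x p) (suffix_from x' (f p))"
proof -
  note P = pos_suffix_from[OF wx] pos_suffix_from[OF wx']
  have ax: "\<And>j. (p,j) \<in> fst x \<Longrightarrow> j \<in> pos x" by (auto intro: FieldI2)
  have ax': "\<And>j. (f p,j) \<in> fst x' \<Longrightarrow> j \<in> pos x'" by (auto intro: FieldI2)
  show ?thesis
  proof (rule word_isoI[where f=f and g="inv_into (pos x) f"])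
    fix a assume "a \<in> pos (suffix_from x p)"
    then have a: "(p,a) \<in> fst x" "a \<in> pos x" using P ax by auto
    then show "f a \<in> pos (suffix_from x' (f p))" "inv_into (pos x) f (f a) = a" "snd (suffix_from x' (f p)) (f a) = snd (suffix_from x p) a"
      using P iso_map_ord[OF f p a(2)] iso_map_inv_left[OF f] iso_map_label[OF f] by auto
  next
    fix b assume "b \<in> pos (suffix_from x' (f p))"
    then have b: "(f p, b) \<in> fst x'" "b \<in> pos x'" using P ax' by auto
    have "(f p, f (inv_into (pos x) f b)) \<in> fst x'" using b iso_map_inv_right[OF f] by simp
    then have "(p, inv_into (pos x) f b) \<in> fst x" using iso_map_ord[OF f p iso_map_inv_in[OF f b(2)]] by simp
    then show "inv_into (pos x) f b \<in> pos (suffix_from x p)" "f (inv_into (pos x) f b) = b"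
      using P b iso_map_inv_right[OF f] by auto
  next
    fix i j assume "i \<in> pos (suffix_from x p)" "j \<in> pos (suffix_from x p)"
    then have "i \<in> pos x" "j \<in> pos x" "(p,i) \<in> fst x" "(p,j) \<in> fst x" using P ax by auto
    then show "((i, j) \<in> fst (suffix_from x p)) = ((f i, f j) \<in> fst (suffix_from x' (f p)))"
      using iso_map_ord[OF f] p by auto
  qed
qed

section \<open>Strict and lexicographic comparison\<close>

definition str_witness :: "('p,'a::linorder) word \<Rightarrow> ('q,'a) word \<Rightarrow> 'p \<Rightarrow> 'q \<Rightarrow> ('p \<Rightarrow> 'q) \<Rightarrow> bool" where
  "str_witness x y p p' f \<longleftrightarrow> p \<in> pos x \<and> p' \<in> pos y \<and> bij_betw f (below (fst x) p) (below (fst y) p')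
     \<and> (\<forall>i\<in>below (fst x) p. \<forall>j\<in>below (fst x) p. (i, j) \<in> fst x \<longleftrightarrow> (f i, f j) \<in> fst y)
     \<and> (\<forall>i\<in>below (fst x) p. snd y (f i) = snd x i) \<and> snd x p < snd y p'"

lemma str_less_iff_str_witness: assumes "is_word x" "is_word y"
  shows "str_less x y \<longleftrightarrow> (\<exists>p p' f. str_witness x y p p' f)"
proof -
  have F1: "\<And>p. Field (Restr (fst x) (below (fst x) p)) = below (fst x) p"
    using Field_Restr_Well_order assms below_subset_Field by (metis is_word_def)
  have F2: "\<And>p. Field (Restr (fst y) (below (fst y) p)) = below (fst y) p"
    using Field_Restr_Well_order assms below_subset_Field by (metis is_word_def)
  have E: "(\<forall>i\<in>below (fst x) p. \<forall>j\<in>below (fst x) p. (i, j) \<in> Restr (fst x) (below (fst x) p) \<longleftrightarrow> (f i, f j) \<in> Restr (fst y) (below (fst y) p'))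
     \<longleftrightarrow> (\<forall>i\<in>below (fst x) p. \<forall>j\<in>below (fst x) p. (i, j) \<in> fst x \<longleftrightarrow> (f i, f j) \<in> fst y)"
    if "bij_betw f (below (fst x) p) (below (fst y) p')" for p p' f
  proof -
    have fi: "\<forall>i\<in>below (fst x) p. f i \<in> below (fst y) p'" using bij_betw_apply[OF that] by blast
    show ?thesis
    proof
      assume H: "\<forall>i\<in>below (fst x) p. \<forall>j\<in>below (fst x) p. (i, j) \<in> Restr (fst x) (below (fst x) p) \<longleftrightarrow> (f i, f j) \<in> Restr (fst y) (below (fst y) p')"
      show "\<forall>i\<in>below (fst x) p. \<forall>j\<in>below (fst x) p. (i, j) \<in> fst x \<longleftrightarrow> (f i, f j) \<in> fst y"
      proof (intro ballI)
        fix i j assume ij: "i \<in> below (fst x) p" "j \<in> below (fst x) p"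
        then show "(i, j) \<in> fst x \<longleftrightarrow> (f i, f j) \<in> fst y" using H[rule_format, OF ij] fi[rule_format, OF ij(1)] fi[rule_format, OF ij(2)]
          by simp
      qed
    next
      assume H: "\<forall>i\<in>below (fst x) p. \<forall>j\<in>below (fst x) p. (i, j) \<in> fst x \<longleftrightarrow> (f i, f j) \<in> fst y"
      show "\<forall>i\<in>below (fst x) p. \<forall>j\<in>below (fst x) p. (i, j) \<in> Restr (fst x) (below (fst x) p) \<longleftrightarrow> (f i, f j) \<in> Restr (fst y) (below (fst y) p')"
      proof (intro ballI)
        fix i j assume ij: "i \<in> below (fst x) p" "j \<in> below (fst x) p"
        then show "(i, j) \<in> Restr (fst x) (below (fst x) p) \<longleftrightarrow> (f i, f j) \<in> Restr (fst y) (below (fst y) p')" using H[rule_format, OF ij] fi[rule_format, OF ij(1)] fi[rule_format, OF ij(2)]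
          by simp
      qed
    qed
  qed
  have W: "iso_map (restrict_word x (below (fst x) p)) (restrict_word y (below (fst y) p')) f \<longleftrightarrow>
     bij_betw f (below (fst x) p) (below (fst y) p')
     \<and> (\<forall>i\<in>below (fst x) p. \<forall>j\<in>below (fst x) p. (i, j) \<in> fst x \<longleftrightarrow> (f i, f j) \<in> fst y)
     \<and> (\<forall>i\<in>below (fst x) p. snd y (f i) = snd x i)" for p p' f
    unfolding iso_map_def restrict_word_def fst_conv snd_conv F1 F2 using E[of f p p'] by blast
  show ?thesis unfolding str_less_def str_witness_def word_iso_iff_iso_map W by blast
qed

lemma str_witness_imp_init_emb: assumes "is_word x" "is_word y" "str_witness x y p p' h"
  shows "init_emb (fst x) (fst y) (below (fst x) p) h"
  unfolding init_emb_def
proof (intro conjI)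
  have wx: "Well_order (fst x)" and wy: "Well_order (fst y)" using assms by (auto simp: is_word_def)
  have B: "bij_betw h (below (fst x) p) (below (fst y) p')" using assms(3) by (simp add: str_witness_def)
  show "inj_on h (below (fst x) p)" using B by (simp add: bij_betw_def)
  show "h ` below (fst x) p \<subseteq> Field (fst y)" using B below_subset_Field by (metis bij_betw_imp_surj_on)
  show "below (fst x) p \<subseteq> Field (fst x)" by (rule below_subset_Field)
  show "\<forall>i\<in>below (fst x) p. \<forall>j\<in>below (fst x) p. ((i, j) \<in> fst x) = ((h i, h j) \<in> fst y)"
    using assms(3) by (simp add: str_witness_def)
  show "\<forall>i\<in>below (fst x) p. \<forall>j. (j, i) \<in> fst x \<longrightarrow> j \<in> below (fst x) p" using below_down_closed[OF wx] .
  show "\<forall>i\<in>below (fst x) p. \<forall>j. (j, h i) \<in> fst y \<longrightarrow> j \<in> h ` below (fst x) p"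
  proof (intro ballI allI impI)
    fix i j assume i: "i \<in> below (fst x) p" and j: "(j, h i) \<in> fst y"
    have "h i \<in> below (fst y) p'" using B i by (meson bij_betw_apply)
    then have "j \<in> below (fst y) p'" using below_down_closed[OF wy] j by blast
    then show "j \<in> h ` below (fst x) p" using B by (simp add: bij_betw_def)
  qed
qed

lemma str_witness_iff: assumes "is_word x" "is_word y"
  shows "str_witness x y p p' h \<longleftrightarrow> p \<in> pos x \<and> p' \<in> pos y \<and> init_emb (fst x) (fst y) (below (fst x) p) h
     \<and> h ` below (fst x) p = below (fst y) p' \<and> (\<forall>i\<in>below (fst x) p. snd y (h i) = snd x i)
     \<and> snd x p < snd y p'"
proof
  assume S: "str_witness x y p p' h"
  show "p \<in> pos x \<and> p' \<in> pos y \<and> init_emb (fst x) (fst y) (below (fst x) p) h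
     \<and> h ` below (fst x) p = below (fst y) p' \<and> (\<forall>i\<in>below (fst x) p. snd y (h i) = snd x i)
     \<and> snd x p < snd y p'"
  proof (intro conjI)
    show "p \<in> pos x" "p' \<in> pos y" "snd x p < snd y p'" using S unfolding str_witness_def by blast+
    show "init_emb (fst x) (fst y) (below (fst x) p) h" by (rule str_witness_imp_init_emb[OF assms S])
    show "h ` below (fst x) p = below (fst y) p'" using S unfolding str_witness_def bij_betw_def by blast
    show "\<forall>i\<in>below (fst x) p. snd y (h i) = snd x i" using S unfolding str_witness_def by blast
  qed
next
  assume S: "p \<in> pos x \<and> p' \<in> pos y \<and> init_emb (fst x) (fst y) (below (fst x) p) h
     \<and> h ` below (fst x) p = below (fst y) p' \<and> (\<forall>i\<in>below (fst x) p. snd y (h i) = snd x i)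
     \<and> snd x p < snd y p'"
  then have P: "init_emb (fst x) (fst y) (below (fst x) p) h" by blast
  show "str_witness x y p p' h" unfolding str_witness_def bij_betw_def
  proof (intro conjI)
    show "p \<in> pos x" "p' \<in> pos y" "snd x p < snd y p'" using S by blast+
    show "inj_on h (below (fst x) p)" by (rule init_emb_inj[OF P])
    show "h ` below (fst x) p = below (fst y) p'" using S by blast
    show "\<forall>i\<in>below (fst x) p. snd y (h i) = snd x i" using S by blast
    show "\<forall>i\<in>below (fst x) p. \<forall>j\<in>below (fst x) p. ((i, j) \<in> fst x) = ((h i, h j) \<in> fst y)"
      using init_emb_ord[OF P] by blast
  qed
qed

lemma str_witness_D: assumes "is_word x" "is_word y" "str_witness x y p p' h"
  shows str_witness_pos: "p \<in> pos x" and str_witness_pos': "p' \<in> pos y" and str_witness_init_emb: "init_emb (fst x) (fst y) (below (fst x) p) h"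
   and str_witness_image: "h ` below (fst x) p = below (fst y) p'"
   and str_witness_label: "\<And>i. i \<in> below (fst x) p \<Longrightarrow> snd y (h i) = snd x i"
   and str_witness_less: "snd x p < snd y p'"
  using assms str_witness_iff[OF assms(1,2)] by blast+

lemma str_witnessI: assumes "is_word x" "is_word y" "p \<in> pos x" "p' \<in> pos y" "init_emb (fst x) (fst y) (below (fst x) p) h"
     "h ` below (fst x) p = below (fst y) p'" "\<And>i. i \<in> below (fst x) p \<Longrightarrow> snd y (h i) = snd x i"
     "snd x p < snd y p'"
   shows "str_witness x y p p' h"
  unfolding str_witness_iff[OF assms(1,2)] by (intro conjI ballI assms(3-8)) assumption

lemma prefixes_no_str_witness:
  assumes wx: "is_word x" and wy: "is_word y" and wz: "is_word z"
    and f: "prefix_map x z f" and g: "prefix_map y z g" and h: "str_witness x y p p' h"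
  shows False
proof -
  have wox: "Well_order (fst x)" and woz: "Well_order (fst z)" using wx wz by (auto simp: is_word_def)
  have p: "p \<in> pos x" and p': "p' \<in> pos y" using str_witness_pos[OF wx wy h] str_witness_pos'[OF wx wy h] .
  have H: "init_emb (fst x) (fst y) (below (fst x) p) h" by (rule str_witness_init_emb[OF wx wy h])
  have Hi: "h ` below (fst x) p = below (fst y) p'" by (rule str_witness_image[OF wx wy h])
  have GH: "init_emb (fst x) (fst z) (below (fst x) p) (g \<circ> h)"
    using init_emb_comp[OF H prefix_map_init_emb[OF g]] Hi below_subset_Field by metis
  have F: "init_emb (fst x) (fst z) (below (fst x) p) f"
    using init_emb_restrict[OF prefix_map_init_emb[OF f] below_subset_Field below_down_closed[OF wox]] .
  have eq: "\<forall>i\<in>below (fst x) p. f i = (g \<circ> h) i"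
    using init_emb_unique[OF wox woz F GH] by blast
  have "f ` below (fst x) p = below (fst z) (f p)" by (rule prefix_map_below[OF wx wz f p])
  moreover have "(g \<circ> h) ` below (fst x) p = below (fst z) (g p')"
    by (rule image_comp_eq[OF Hi prefix_map_below[OF wy wz g p']])
  moreover have "f ` below (fst x) p = (g \<circ> h) ` below (fst x) p" using eq by (intro image_cong) auto
  ultimately have "below (fst z) (f p) = below (fst z) (g p')" by simp
  moreover have "f p \<in> pos z" using init_emb_image[OF prefix_map_init_emb[OF f]] p by blast
  moreover have "g p' \<in> pos z" using init_emb_image[OF prefix_map_init_emb[OF g]] p' by blast
  ultimately have "f p = g p'" using below_inj[OF woz] by blast
  then have "snd x p = snd y p'" using prefix_map_label[OF f p] prefix_map_label[OF g p'] by simp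
  then show False using str_witness_less[OF wx wy h] by simp
qed

lemma str_witness_trans:
  assumes wx: "is_word x" and wy: "is_word y" and wz: "is_word z"
    and h: "str_witness x y p p' h" and k: "str_witness y z q q' k"
  shows "\<exists>a b c. str_witness x z a b c"
proof -
  have wox: "Well_order (fst x)" and woy: "Well_order (fst y)" and woz: "Well_order (fst z)"
    using wx wy wz by (auto simp: is_word_def)
  have H: "init_emb (fst x) (fst y) (below (fst x) p) h" by (rule str_witness_init_emb[OF wx wy h])
  have Hi: "h ` below (fst x) p = below (fst y) p'" by (rule str_witness_image[OF wx wy h])
  have K: "init_emb (fst y) (fst z) (below (fst y) q) k" by (rule str_witness_init_emb[OF wy wz k])
  have Ki: "k ` below (fst y) q = below (fst z) q'" by (rule str_witness_image[OF wy wz k])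
  have p: "p \<in> pos x" and p': "p' \<in> pos y" and q: "q \<in> pos y" and q': "q' \<in> pos z"
    using str_witness_pos[OF wx wy h] str_witness_pos'[OF wx wy h] str_witness_pos[OF wy wz k] str_witness_pos'[OF wy wz k] .
  have hl: "\<And>i. i \<in> below (fst x) p \<Longrightarrow> snd y (h i) = snd x i" using str_witness_label[OF wx wy h] .
  have kl: "\<And>i. i \<in> below (fst y) q \<Longrightarrow> snd z (k i) = snd y i" using str_witness_label[OF wy wz k] .
  have l1: "snd x p < snd y p'" and l2: "snd y q < snd z q'" using str_witness_less[OF wx wy h] str_witness_less[OF wy wz k] .
  consider "p' = q" | "p' \<in> below (fst y) q" | "q \<in> below (fst y) p'"
    using Well_order_total[OF woy p' q] by (auto simp: below_def)
  then show ?thesis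
  proof cases
    case 1
    have "str_witness x z p q' (k \<circ> h)"
    proof (rule str_witnessI[OF wx wz p q'])
      show "init_emb (fst x) (fst z) (below (fst x) p) (k \<circ> h)" using init_emb_comp[OF H K] Hi 1 by simp
      show "(k \<circ> h) ` below (fst x) p = below (fst z) q'" using image_comp_eq[OF Hi Ki[folded 1]] .
      show "snd z ((k \<circ> h) i) = snd x i" if "i \<in> below (fst x) p" for i
      proof -
        have "h i \<in> below (fst y) q" using imageI[OF that, of h] Hi 1 by simp
        then show ?thesis using hl[OF that] kl by simp
      qed
      show "snd x p < snd z q'" using l1 l2 1 by simp
    qed
    then show ?thesis by blast
  next
    case 2
    have sub: "below (fst y) p' \<subseteq> below (fst y) q" using below_mono[OF woy 2] .
    have kp': "k p' \<in> pos z" using init_emb_image[OF K] 2 by blast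
    have "str_witness x z p (k p') (k \<circ> h)"
    proof (rule str_witnessI[OF wx wz p kp'])
      show "init_emb (fst x) (fst z) (below (fst x) p) (k \<circ> h)" using init_emb_comp[OF H K] Hi sub by simp
      show "(k \<circ> h) ` below (fst x) p = below (fst z) (k p')"
        by (rule image_comp_eq[OF Hi init_emb_below[OF woy woz K 2]])
      show "snd z ((k \<circ> h) i) = snd x i" if "i \<in> below (fst x) p" for i
      proof -
        have "h i \<in> below (fst y) p'" using imageI[OF that, of h] Hi by simp
        then have "h i \<in> below (fst y) q" using sub by blast
        then show ?thesis using hl[OF that] kl by simp
      qed
      show "snd x p < snd z (k p')" using l1 kl[OF 2] by simp
    qed
    then show ?thesis by blast
  next
    case 3
    have "q \<in> h ` below (fst x) p" using 3 Hi by simp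
    then obtain r where r: "r \<in> below (fst x) p" "q = h r" by blast
    have rx: "r \<in> pos x" using r below_subset_Field[of "fst x" p] by blast
    have sub: "below (fst x) r \<subseteq> below (fst x) p" using below_mono[OF wox r(1)] .
    have H': "init_emb (fst x) (fst y) (below (fst x) r) h"
      using init_emb_restrict[OF H sub below_down_closed[OF wox]] .
    have H'i: "h ` below (fst x) r = below (fst y) q" using init_emb_below[OF wox woy H r(1)] r by simp
    have "str_witness x z r q' (k \<circ> h)"
    proof (rule str_witnessI[OF wx wz rx q'])
      show "init_emb (fst x) (fst z) (below (fst x) r) (k \<circ> h)" using init_emb_comp[OF H' K] H'i by simp
      show "(k \<circ> h) ` below (fst x) r = below (fst z) q'" by (rule image_comp_eq[OF H'i Ki])
      show "snd z ((k \<circ> h) i) = snd x i" if "i \<in> below (fst x) r" for i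
      proof -
        have "h i \<in> below (fst y) q" using imageI[OF that, of h] H'i by simp
        then show ?thesis using hl sub that kl by auto
      qed
      show "snd x r < snd z q'" using l2 hl[OF r(1)] r by simp
    qed
    then show ?thesis by blast
  qed
qed

lemma str_witness_extend:
  assumes wx: "is_word x" and wy: "is_word y" and wx': "is_word x'" and wy': "is_word y'"
    and h: "str_witness x y p p' h" and f: "prefix_map x x' f" and g: "prefix_map y y' g"
  shows "str_witness x' y' (f p) (g p') (g \<circ> h \<circ> inv_into (pos x) f)"
proof -
  have wox: "Well_order (fst x)" and woy: "Well_order (fst y)" and wox': "Well_order (fst x')" and woy': "Well_order (fst y')"
    using wx wy wx' wy' by (auto simp: is_word_def)
  have H: "init_emb (fst x) (fst y) (below (fst x) p) h" by (rule str_witness_init_emb[OF wx wy h])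
  have Hi: "h ` below (fst x) p = below (fst y) p'" by (rule str_witness_image[OF wx wy h])
  have p: "p \<in> pos x" and p': "p' \<in> pos y" using str_witness_pos[OF wx wy h] str_witness_pos'[OF wx wy h] .
  have F: "init_emb (fst x) (fst x') (pos x) f" by (rule prefix_map_init_emb[OF f])
  have G: "init_emb (fst y) (fst y') (pos y) g" by (rule prefix_map_init_emb[OF g])
  have injf: "inj_on f (pos x)" by (rule init_emb_inj[OF F])
  have fp: "f p \<in> pos x'" using init_emb_image[OF F] p by blast
  have gp: "g p' \<in> pos y'" using init_emb_image[OF G] p' by blast
  have Fb: "f ` below (fst x) p = below (fst x') (f p)" by (rule prefix_map_below[OF wx wx' f p])
  have Gb: "g ` below (fst y) p' = below (fst y') (g p')" by (rule prefix_map_below[OF wy wy' g p'])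
  have FI: "init_emb (fst x') (fst x) (f ` pos x) (inv_into (pos x) f)" by (rule init_emb_inv[OF F])
  have "f ` below (fst x) p \<subseteq> f ` pos x" by (rule image_mono[OF below_subset_Field])
  then have subA: "below (fst x') (f p) \<subseteq> f ` pos x" using Fb by simp
  have FI': "init_emb (fst x') (fst x) (below (fst x') (f p)) (inv_into (pos x) f)"
    by (rule init_emb_restrict[OF FI subA below_down_closed[OF wox']])
  have invimg: "inv_into (pos x) f ` below (fst x') (f p) = below (fst x) p"
    by (simp only: Fb[symmetric] inv_into_image_cancel[OF injf below_subset_Field])
  have C1: "init_emb (fst x') (fst y) (below (fst x') (f p)) (h \<circ> inv_into (pos x) f)"
    using init_emb_comp[OF FI' H] invimg by simp
  have C1i: "(h \<circ> inv_into (pos x) f) ` below (fst x') (f p) = below (fst y) p'"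
    by (rule image_comp_eq[OF invimg Hi])
  have C2: "init_emb (fst x') (fst y') (below (fst x') (f p)) (g \<circ> (h \<circ> inv_into (pos x) f))"
    using init_emb_comp[OF C1 G] C1i below_subset_Field by metis
  show ?thesis
  proof (rule str_witnessI[OF wx' wy' fp gp])
    show "init_emb (fst x') (fst y') (below (fst x') (f p)) (g \<circ> h \<circ> inv_into (pos x) f)"
      using C2 by (simp add: comp_assoc)
    show "(g \<circ> h \<circ> inv_into (pos x) f) ` below (fst x') (f p) = below (fst y') (g p')"
      using image_comp_eq[OF C1i Gb] by (simp add: comp_assoc)
  next
    fix i assume i: "i \<in> below (fst x') (f p)"
    then have "i \<in> f ` below (fst x) p" using Fb by simp
    then obtain a where a: "a \<in> below (fst x) p" "i = f a" by blast
    have ax: "a \<in> pos x" using a below_subset_Field[of "fst x" p] by blast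
    have "inv_into (pos x) f i = a" using a ax injf by simp
    moreover have "h a \<in> pos y" using init_emb_image[OF H] a(1) by blast
    ultimately show "snd y' ((g \<circ> h \<circ> inv_into (pos x) f) i) = snd x' i"
      using prefix_map_label[OF g] str_witness_label[OF wx wy h a(1)] prefix_map_label[OF f ax] a by simp
  next
    show "snd x' (f p) < snd y' (g p')"
      using prefix_map_label[OF f p] prefix_map_label[OF g p'] str_witness_less[OF wx wy h] by simp
  qed
qed

lemma str_witness_restrict:
  assumes wP: "is_word P" and wX: "is_word X" and wv: "is_word v"
    and f: "prefix_map P X f" and h: "str_witness X v p p' h" and r: "r \<in> pos P" "p = f r"
  shows "str_witness P v r p' (h \<circ> f)"
proof -
  have woP: "Well_order (fst P)" and woX: "Well_order (fst X)" using wP wX by (auto simp: is_word_def)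
  have H: "init_emb (fst X) (fst v) (below (fst X) p) h" by (rule str_witness_init_emb[OF wX wv h])
  have Hi: "h ` below (fst X) p = below (fst v) p'" by (rule str_witness_image[OF wX wv h])
  have F: "init_emb (fst P) (fst X) (below (fst P) r) f"
    using init_emb_restrict[OF prefix_map_init_emb[OF f] below_subset_Field below_down_closed[OF woP]] .
  have Fi: "f ` below (fst P) r = below (fst X) p" using prefix_map_below[OF wP wX f r(1)] r(2) by simp
  show ?thesis
  proof (rule str_witnessI[OF wP wv r(1) str_witness_pos'[OF wX wv h]])
    show "init_emb (fst P) (fst v) (below (fst P) r) (h \<circ> f)" using init_emb_comp[OF F H] Fi by simp
    show "(h \<circ> f) ` below (fst P) r = below (fst v) p'" by (rule image_comp_eq[OF Fi Hi])
  next
    fix i assume i: "i \<in> below (fst P) r"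
    then have "f i \<in> below (fst X) p" using Fi by (metis imageI)
    moreover have "i \<in> pos P" using i below_subset_Field[of "fst P" r] by blast
    ultimately show "snd v ((h \<circ> f) i) = snd P i" using str_witness_label[OF wX wv h] prefix_map_label[OF f] by simp
  next
    show "snd P r < snd v p'" using str_witness_less[OF wX wv h] prefix_map_label[OF f r(1)] r(2) by simp
  qed
qed

lemma str_witness_prefix_map:
  assumes wP: "is_word P" and wX: "is_word X" and wv: "is_word v"
    and f: "prefix_map P X f" and h: "str_witness X v p p' h" and np: "p \<notin> f ` pos P"
  shows "prefix_map P v (h \<circ> f)" and "(h \<circ> f) ` pos P \<subseteq> below (fst v) p'"
proof -
  have woP: "Well_order (fst P)" and woX: "Well_order (fst X)" using wP wX by (auto simp: is_word_def)
  have H: "init_emb (fst X) (fst v) (below (fst X) p) h" by (rule str_witness_init_emb[OF wX wv h])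
  have Hi: "h ` below (fst X) p = below (fst v) p'" by (rule str_witness_image[OF wX wv h])
  have F: "init_emb (fst P) (fst X) (pos P) f" by (rule prefix_map_init_emb[OF f])
  have p: "p \<in> pos X" using str_witness_pos[OF wX wv h] .
  have sub: "f ` pos P \<subseteq> below (fst X) p"
  proof
    fix t assume t: "t \<in> f ` pos P"
    then obtain a where a: "a \<in> pos P" "t = f a" by blast
    have tX: "t \<in> pos X" using init_emb_image[OF F] t by blast
    have "(p, t) \<notin> fst X" using init_emb_image_down_closed[OF F a(1)] a(2) np by blast
    then have "(t, p) \<in> fst X" "t \<noteq> p" using Well_order_total[OF woX tX p] Well_order_refl[OF woX p] by auto
    then show "t \<in> below (fst X) p" by (simp add: below_def)
  qed
  have C: "init_emb (fst P) (fst v) (pos P) (h \<circ> f)" using init_emb_comp[OF F H sub] .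
  show "prefix_map P v (h \<circ> f)" unfolding prefix_map_iff_init_emb
  proof (intro conjI C ballI)
    fix i assume i: "i \<in> pos P"
    then have "f i \<in> below (fst X) p" using sub by blast
    then show "snd v ((h \<circ> f) i) = snd P i" using str_witness_label[OF wX wv h] prefix_map_label[OF f i] by simp
  qed
  have "h ` f ` pos P \<subseteq> h ` below (fst X) p" using sub by (rule image_mono)
  then show "(h \<circ> f) ` pos P \<subseteq> below (fst v) p'" using Hi by (simp add: image_comp)
qed

lemma str_less_is_prefix_mono: assumes "is_word x" "is_word y" "is_word x'" "is_word y'"
   "str_less x y" "is_prefix x x'" "is_prefix y y'" shows "str_less x' y'"
proof -
  obtain p p' h where h: "str_witness x y p p' h" using assms(5) str_less_iff_str_witness[OF assms(1,2)] by blast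
  obtain f where f: "prefix_map x x' f" using assms(6) is_prefix_iff_prefix_map[OF assms(3)] by blast
  obtain g where g: "prefix_map y y' g" using assms(7) is_prefix_iff_prefix_map[OF assms(4)] by blast
  show ?thesis using str_witness_extend[OF assms(1-4) h f g] str_less_iff_str_witness[OF assms(3,4)] by blast
qed

lemma str_less_trans: assumes "is_word x" "is_word y" "is_word z"
   "str_less x y" "str_less y z" shows "str_less x z"
proof -
  obtain p p' h where h: "str_witness x y p p' h" using assms(4) str_less_iff_str_witness[OF assms(1,2)] by blast
  obtain q q' k where k: "str_witness y z q q' k" using assms(5) str_less_iff_str_witness[OF assms(2,3)] by blast
  show ?thesis using str_witness_trans[OF assms(1-3) h k] str_less_iff_str_witness[OF assms(1,3)] by blast
qed

lemma common_extension_not_str_less: assumes "is_word x" "is_word y" "is_word z"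
   "is_prefix x z" "is_prefix y z" shows "\<not> str_less x y"
proof
  assume "str_less x y"
  then obtain p p' h where h: "str_witness x y p p' h" using str_less_iff_str_witness[OF assms(1,2)] by blast
  obtain f where f: "prefix_map x z f" using assms(4) is_prefix_iff_prefix_map[OF assms(3)] by blast
  obtain g where g: "prefix_map y z g" using assms(5) is_prefix_iff_prefix_map[OF assms(3)] by blast
  show False by (rule prefixes_no_str_witness[OF assms(1-3) f g h])
qed

lemma str_less_imp_not_is_prefix:
  assumes "is_word x" "is_word y" "str_less x y"
  shows "\<not> is_prefix x y"
  using assms common_extension_not_str_less is_prefix_refl by blast

lemma str_less_iso_left: "is_word x \<Longrightarrow> is_word y \<Longrightarrow> is_word x' \<Longrightarrow> word_iso x x' \<Longrightarrow> str_less x y \<Longrightarrow> str_less x' y"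
  using str_less_is_prefix_mono word_iso_imp_is_prefix is_prefix_refl by blast

lemma str_less_iso_right: "is_word x \<Longrightarrow> is_word y \<Longrightarrow> is_word y' \<Longrightarrow> word_iso y y' \<Longrightarrow> str_less x y \<Longrightarrow> str_less x y'"
  using str_less_is_prefix_mono word_iso_imp_is_prefix is_prefix_refl by blast

lemma str_less_lex_le_trans: "is_word x \<Longrightarrow> is_word y \<Longrightarrow> is_word z \<Longrightarrow> str_less x y \<Longrightarrow> lex_le y z \<Longrightarrow> str_less x z"
  unfolding lex_le_def using str_less_trans str_less_is_prefix_mono is_prefix_refl by blast

lemma lex_le_is_prefix_trans: "is_word x \<Longrightarrow> is_word y \<Longrightarrow> is_word z \<Longrightarrow> lex_le x y \<Longrightarrow> is_prefix y z \<Longrightarrow> lex_le x z"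
  unfolding lex_le_def using is_prefix_trans str_less_is_prefix_mono is_prefix_refl by blast

lemma lex_le_iso_left: "is_word x \<Longrightarrow> is_word y \<Longrightarrow> is_word x' \<Longrightarrow> word_iso x x' \<Longrightarrow> lex_le x y \<Longrightarrow> lex_le x' y"
  unfolding lex_le_def using is_prefix_iso_left str_less_iso_left word_iso_sym by blast

lemma lex_le_iso_right: "is_word x \<Longrightarrow> is_word y \<Longrightarrow> is_word y' \<Longrightarrow> word_iso y y' \<Longrightarrow> lex_le x y \<Longrightarrow> lex_le x y'"
  unfolding lex_le_def using is_prefix_iso_right str_less_iso_right by blast

lemma lex_le_is_prefix_imp_iso: "is_word x \<Longrightarrow> is_word y \<Longrightarrow> lex_le x y \<Longrightarrow> is_prefix y x \<Longrightarrow> word_iso x y"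
  unfolding lex_le_def using is_prefix_antisym common_extension_not_str_less is_prefix_refl by blast

section \<open>Concatenation\<close>

lemma concat_word_simps[simp]:
  "(Inl i, Inl i') \<in> fst (concat_word x y) \<longleftrightarrow> (i,i') \<in> fst x"
  "(Inr j, Inr j') \<in> fst (concat_word x y) \<longleftrightarrow> (j,j') \<in> fst y"
  "(Inl i, Inr j) \<in> fst (concat_word x y) \<longleftrightarrow> i \<in> pos x \<and> j \<in> pos y"
  "(Inr j, Inl i) \<notin> fst (concat_word x y)"
  "snd (concat_word x y) (Inl i) = snd x i"
  "snd (concat_word x y) (Inr j) = snd y j"
  by (auto simp: concat_word_def)

lemma pos_concat_word: assumes "is_word x" "is_word y"
  shows "pos (concat_word x y) = Inl ` pos x \<union> Inr ` pos y"
proof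
  show "pos (concat_word x y) \<subseteq> Inl ` pos x \<union> Inr ` pos y"
    by (auto simp: concat_word_def Field_def)
  have "Inl i \<in> pos (concat_word x y)" if "i \<in> pos x" for i
  proof -
    have "(i,i) \<in> fst x" using Well_order_refl[of "fst x" i] assms that by (auto simp: is_word_def)
    then have "(Inl i, Inl i) \<in> fst (concat_word x y)" by simp
    then show ?thesis by (rule FieldI1)
  qed
  moreover have "Inr i \<in> pos (concat_word x y)" if "i \<in> pos y" for i
  proof -
    have "(i,i) \<in> fst y" using Well_order_refl[of "fst y" i] assms that by (auto simp: is_word_def)
    then have "(Inr i, Inr i) \<in> fst (concat_word x y)" by simp
    then show ?thesis by (rule FieldI1)
  qed
  ultimately show "Inl ` pos x \<union> Inr ` pos y \<subseteq> pos (concat_word x y)" by blast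
qed

lemma concat_word_has_least:
  assumes wx: "is_word x" and wy: "is_word y"
    and A: "A \<subseteq> pos (concat_word x y)" "A \<noteq> {}"
  shows "\<exists>a\<in>A. \<forall>a'\<in>A. (a, a') \<in> fst (concat_word x y)"
proof -
  have wox: "Well_order (fst x)" and woy: "Well_order (fst y)" using wx wy by (auto simp: is_word_def)
  have P: "pos (concat_word x y) = Inl ` pos x \<union> Inr ` pos y" by (rule pos_concat_word[OF wx wy])
  let ?r = "fst (concat_word x y)"
  show ?thesis
  proof (cases "Inl -` A = {}")
    case False
    have "Inl -` A \<subseteq> pos x" using A P by auto
    then obtain m where m: "m \<in> Inl -` A" "\<forall>s\<in>Inl -` A. (m,s) \<in> fst x"
      using Well_order_least[OF wox _ False] by blast
    have "\<forall>a'\<in>A. (Inl m, a') \<in> ?r"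
    proof
      fix a' assume a': "a' \<in> A"
      show "(Inl m, a') \<in> ?r"
      proof (cases a')
        case (Inl i) then show ?thesis using m a' by auto
      next
        case (Inr j) then show ?thesis using m a' A P by (auto intro: FieldI1)
      qed
    qed
    then show ?thesis using m by auto
  next
    case True
    have AR: "A \<subseteq> Inr ` pos y"
    proof
      fix a assume a: "a \<in> A"
      show "a \<in> Inr ` pos y"
      proof (cases a)
        case (Inl i) then show ?thesis using a True by auto
      next
        case (Inr j) then show ?thesis using a A P by auto
      qed
    qed
    then have ne: "Inr -` A \<noteq> {}" "Inr -` A \<subseteq> pos y" using A by auto
    then obtain m where m: "m \<in> Inr -` A" "\<forall>s\<in>Inr -` A. (m,s) \<in> fst y"
      using Well_order_least[OF woy] by blast
    have "\<forall>a'\<in>A. (Inr m, a') \<in> ?r" using AR m by auto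
    then show ?thesis using m by auto
  qed
qed

lemma is_word_concat: assumes wx: "is_word x" and wy: "is_word y" shows "is_word (concat_word x y)"
proof -
  have wox: "Well_order (fst x)" and woy: "Well_order (fst y)" using wx wy by (auto simp: is_word_def)
  have P: "pos (concat_word x y) = Inl ` pos x \<union> Inr ` pos y" by (rule pos_concat_word[OF wx wy])
  let ?r = "fst (concat_word x y)"
  show ?thesis unfolding is_word_def
  proof (rule Well_orderI)
    fix p assume "p \<in> Field ?r"
    then show "(p,p) \<in> ?r" using P Well_order_refl[OF wox] Well_order_refl[OF woy] by auto
  next
    show "trans ?r" unfolding trans_def
    proof (intro allI impI)
      fix p q s assume "(p,q) \<in> ?r" "(q,s) \<in> ?r"
      then show "(p,s) \<in> ?r"
        by (cases p; cases q; cases s; simp; meson FieldI1 FieldI2 Well_order_trans[OF wox] Well_order_trans[OF woy])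
    qed
  next
    show "antisym ?r" unfolding antisym_def
    proof (intro allI impI)
      fix p q assume "(p,q) \<in> ?r" "(q,p) \<in> ?r"
      then show "p = q" using Well_order_antisym[OF wox] Well_order_antisym[OF woy]
        by (cases p; cases q; simp)
    qed
  next
    fix p q assume "p \<in> Field ?r" "q \<in> Field ?r"
    then show "(p,q) \<in> ?r \<or> (q,p) \<in> ?r" using P by (auto; meson Well_order_total[OF wox] Well_order_total[OF woy])
  next
    fix A assume "A \<subseteq> Field ?r" "A \<noteq> {}"
    then show "\<exists>a\<in>A. \<forall>a'\<in>A. (a, a') \<in> ?r" by (rule concat_word_has_least[OF wx wy])
  qed
qed

lemma concat_word_cong:
  assumes wA: "is_word A" and wA': "is_word A'" and wB: "is_word B" and wB': "is_word B'"
    and iA: "word_iso A A'" and iB: "word_iso B B'"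
  shows "word_iso (concat_word A B) (concat_word A' B')"
proof -
  obtain f where f: "iso_map A A' f" using iA word_iso_iff_iso_map by blast
  obtain g where g: "iso_map B B' g" using iB word_iso_iff_iso_map by blast
  let ?f' = "inv_into (pos A) f" and ?g' = "inv_into (pos B) g"
  note P = pos_concat_word[OF wA wB] pos_concat_word[OF wA' wB']
  show ?thesis
  proof (rule word_isoI[where f="map_sum f g" and g="map_sum ?f' ?g'"])
    fix a assume "a \<in> pos (concat_word A B)"
    then show "map_sum f g a \<in> pos (concat_word A' B')" using P iso_map_in[OF f] iso_map_in[OF g] by auto
  next
    fix a assume "a \<in> pos (concat_word A' B')"
    then show "map_sum ?f' ?g' a \<in> pos (concat_word A B)" using P iso_map_inv_in[OF f] iso_map_inv_in[OF g] by auto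
  next
    fix a assume "a \<in> pos (concat_word A B)"
    then show "map_sum ?f' ?g' (map_sum f g a) = a" using P iso_map_inv_left[OF f] iso_map_inv_left[OF g] by auto
  next
    fix a assume "a \<in> pos (concat_word A' B')"
    then show "map_sum f g (map_sum ?f' ?g' a) = a" using P iso_map_inv_right[OF f] iso_map_inv_right[OF g] by auto
  next
    fix i j assume "i \<in> pos (concat_word A B)" "j \<in> pos (concat_word A B)"
    then show "(i,j) \<in> fst (concat_word A B) \<longleftrightarrow> (map_sum f g i, map_sum f g j) \<in> fst (concat_word A' B')"
      using P iso_map_ord[OF f] iso_map_ord[OF g] iso_map_in[OF f] iso_map_in[OF g] by auto
  next
    fix i assume "i \<in> pos (concat_word A B)"
    then show "snd (concat_word A' B') (map_sum f g i) = snd (concat_word A B) i"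
      using P iso_map_label[OF f] iso_map_label[OF g] by auto
  qed
qed

lemma concat_word_assoc:
  assumes wA: "is_word A" and wB: "is_word B" and wC: "is_word C"
  shows "word_iso (concat_word (concat_word A B) C) (concat_word A (concat_word B C))"
proof (rule word_isoI[where f="case_sum (case_sum Inl (Inr \<circ> Inl)) (Inr \<circ> Inr)"
      and g="case_sum (Inl \<circ> Inl) (case_sum (Inl \<circ> Inr) Inr)"])
  note P = pos_concat_word[OF is_word_concat[OF wA wB] wC] pos_concat_word[OF wA is_word_concat[OF wB wC]]
     pos_concat_word[OF wA wB] pos_concat_word[OF wB wC]
  fix a assume "a \<in> pos (concat_word (concat_word A B) C)"
  then show "case_sum (case_sum Inl (Inr \<circ> Inl)) (Inr \<circ> Inr) a \<in> pos (concat_word A (concat_word B C))"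
    "case_sum (Inl \<circ> Inl) (case_sum (Inl \<circ> Inr) Inr) (case_sum (case_sum Inl (Inr \<circ> Inl)) (Inr \<circ> Inr) a) = a"
    "snd (concat_word A (concat_word B C)) (case_sum (case_sum Inl (Inr \<circ> Inl)) (Inr \<circ> Inr) a) = snd (concat_word (concat_word A B) C) a"
    using P by auto
next
  note P = pos_concat_word[OF is_word_concat[OF wA wB] wC] pos_concat_word[OF wA is_word_concat[OF wB wC]]
     pos_concat_word[OF wA wB] pos_concat_word[OF wB wC]
  fix b assume "b \<in> pos (concat_word A (concat_word B C))"
  then show "case_sum (Inl \<circ> Inl) (case_sum (Inl \<circ> Inr) Inr) b \<in> pos (concat_word (concat_word A B) C)"
    "case_sum (case_sum Inl (Inr \<circ> Inl)) (Inr \<circ> Inr) (case_sum (Inl \<circ> Inl) (case_sum (Inl \<circ> Inr) Inr) b) = b"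
    using P by auto
next
  note P = pos_concat_word[OF is_word_concat[OF wA wB] wC] pos_concat_word[OF wA is_word_concat[OF wB wC]]
     pos_concat_word[OF wA wB] pos_concat_word[OF wB wC]
  fix i j assume "i \<in> pos (concat_word (concat_word A B) C)" "j \<in> pos (concat_word (concat_word A B) C)"
  then show "((i, j) \<in> fst (concat_word (concat_word A B) C)) =
    ((case_sum (case_sum Inl (Inr \<circ> Inl)) (Inr \<circ> Inr) i, case_sum (case_sum Inl (Inr \<circ> Inl)) (Inr \<circ> Inr) j)
     \<in> fst (concat_word A (concat_word B C)))"
    using P by auto
qed

lemma is_prefix_concat_word: assumes wA: "is_word A" and wB: "is_word B" shows "is_prefix A (concat_word A B)"
proof (rule is_prefixI[OF is_word_concat[OF wA wB]])
  note P = pos_concat_word[OF wA wB]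
  show "inj_on Inl (pos A)" by simp
  show "\<And>a. a \<in> pos A \<Longrightarrow> Inl a \<in> pos (concat_word A B)" using P by auto
  show "\<And>i j. i \<in> pos A \<Longrightarrow> j \<in> pos A \<Longrightarrow> (i,j) \<in> fst A \<longleftrightarrow> (Inl i, Inl j) \<in> fst (concat_word A B)" by simp
  show "\<And>i j. i \<in> pos A \<Longrightarrow> (j, Inl i) \<in> fst (concat_word A B) \<Longrightarrow> j \<in> Inl ` pos A"
  proof -
    fix i j assume "i \<in> pos A" "(j, Inl i) \<in> fst (concat_word A B)"
    then show "j \<in> Inl ` pos A" by (cases j) (auto intro: FieldI1)
  qed
  show "\<And>i. i \<in> pos A \<Longrightarrow> snd (concat_word A B) (Inl i) = snd A i" by simp
qed

lemma is_prefix_concat_word_right: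
  assumes wA: "is_word A" and wB: "is_word B" and wB': "is_word B'" and pB: "is_prefix B B'"
  shows "is_prefix (concat_word A B) (concat_word A B')"
proof -
  obtain f where f: "prefix_map B B' f" using pB is_prefix_iff_prefix_map[OF wB'] by blast
  have F: "init_emb (fst B) (fst B') (pos B) f" by (rule prefix_map_init_emb[OF f])
  note P = pos_concat_word[OF wA wB] pos_concat_word[OF wA wB']
  show ?thesis
  proof (rule is_prefixI[OF is_word_concat[OF wA wB'], where f="map_sum id f"])
    show "inj_on (map_sum id f) (pos (concat_word A B))"
    proof (rule inj_onI)
      fix a b assume "a \<in> pos (concat_word A B)" "b \<in> pos (concat_word A B)" "map_sum id f a = map_sum id f b"
      then show "a = b" using P(1) inj_onD[OF init_emb_inj[OF F]] by (cases a; cases b) auto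
    qed
    show "\<And>a. a \<in> pos (concat_word A B) \<Longrightarrow> map_sum id f a \<in> pos (concat_word A B')"
      using P init_emb_image[OF F] by auto
    show "\<And>i j. i \<in> pos (concat_word A B) \<Longrightarrow> j \<in> pos (concat_word A B) \<Longrightarrow>
       (i,j) \<in> fst (concat_word A B) \<longleftrightarrow> (map_sum id f i, map_sum id f j) \<in> fst (concat_word A B')"
      using P init_emb_ord[OF F] init_emb_image[OF F] by auto
    show "\<And>i. i \<in> pos (concat_word A B) \<Longrightarrow> snd (concat_word A B') (map_sum id f i) = snd (concat_word A B) i"
      using P prefix_map_label[OF f] by auto
  next
    fix i j assume i: "i \<in> pos (concat_word A B)" and j: "(j, map_sum id f i) \<in> fst (concat_word A B')"
    show "j \<in> map_sum id f ` pos (concat_word A B)"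
    proof (cases j)
      case (Inl a)
      then have "a \<in> pos A" using j by (cases i) (auto intro: FieldI1)
      then show ?thesis using Inl P by (auto intro: image_eqI[where x="Inl a"])
    next
      case (Inr b)
      then obtain c where c: "i = Inr c" "c \<in> pos B" using i j P by (cases i) auto
      then have "(b, f c) \<in> fst B'" using j Inr by simp
      then obtain d where "d \<in> pos B" "b = f d" using init_emb_image_down_closed[OF F c(2)] by blast
      then show ?thesis using Inr P by (auto intro: image_eqI[where x="Inr d"])
    qed
  qed
qed

lemma below_concat_Inr: assumes p: "p \<in> pos B"
  shows "below (fst (concat_word A B)) (Inr p) = Inl ` pos A \<union> Inr ` below (fst B) p"
proof
  show "below (fst (concat_word A B)) (Inr p) \<subseteq> Inl ` pos A \<union> Inr ` below (fst B) p"
  proof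
    fix t assume t: "t \<in> below (fst (concat_word A B)) (Inr p)"
    then show "t \<in> Inl ` pos A \<union> Inr ` below (fst B) p" by (cases t) (auto simp: below_def)
  qed
  show "Inl ` pos A \<union> Inr ` below (fst B) p \<subseteq> below (fst (concat_word A B)) (Inr p)"
    using p by (auto simp: below_def)
qed

lemma str_less_concat_word_left:
  assumes wA: "is_word A" and wB: "is_word B" and wB': "is_word B'" and s: "str_less B B'"
  shows "str_less (concat_word A B) (concat_word A B')"
proof -
  obtain p p' h where h: "str_witness B B' p p' h" using s str_less_iff_str_witness[OF wB wB'] by blast
  have p: "p \<in> pos B" and p': "p' \<in> pos B'" using str_witness_pos[OF wB wB' h] str_witness_pos'[OF wB wB' h] .
  have H: "init_emb (fst B) (fst B') (below (fst B) p) h" by (rule str_witness_init_emb[OF wB wB' h])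
  have Hi: "h ` below (fst B) p = below (fst B') p'" by (rule str_witness_image[OF wB wB' h])
  have bi: "bij_betw h (below (fst B) p) (below (fst B') p')" using h by (simp add: str_witness_def)
  let ?h' = "inv_into (below (fst B) p) h"
  have b1: "\<And>a. a \<in> below (fst B) p \<Longrightarrow> h a \<in> below (fst B') p'" using bi by (meson bij_betw_apply)
  have b2: "\<And>a. a \<in> below (fst B') p' \<Longrightarrow> ?h' a \<in> below (fst B) p" using bij_betw_inv_into[OF bi] by (meson bij_betw_apply)
  have b3: "\<And>a. a \<in> below (fst B) p \<Longrightarrow> ?h' (h a) = a" using bi by (meson bij_betw_inv_into_left)
  have b4: "\<And>a. a \<in> below (fst B') p' \<Longrightarrow> h (?h' a) = a" using bi by (meson bij_betw_inv_into_right)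
  have BA: "below (fst (concat_word A B)) (Inr p) = Inl ` pos A \<union> Inr ` below (fst B) p" by (rule below_concat_Inr[OF p])
  have BA': "below (fst (concat_word A B')) (Inr p') = Inl ` pos A \<union> Inr ` below (fst B') p'" by (rule below_concat_Inr[OF p'])
  have "str_witness (concat_word A B) (concat_word A B') (Inr p) (Inr p') (map_sum id h)"
    unfolding str_witness_def
  proof (intro conjI ballI)
    show "Inr p \<in> pos (concat_word A B)" using pos_concat_word[OF wA wB] p by auto
    show "Inr p' \<in> pos (concat_word A B')" using pos_concat_word[OF wA wB'] p' by auto
    show "bij_betw (map_sum id h) (below (fst (concat_word A B)) (Inr p)) (below (fst (concat_word A B')) (Inr p'))"
      unfolding BA BA'
      by (rule bij_betw_byWitness[where f'="map_sum id ?h'"]) (use b1 b2 b3 b4 in auto)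
  next
    fix i j assume i: "i \<in> below (fst (concat_word A B)) (Inr p)" and j: "j \<in> below (fst (concat_word A B)) (Inr p)"
    show "((i, j) \<in> fst (concat_word A B)) = ((map_sum id h i, map_sum id h j) \<in> fst (concat_word A B'))"
    proof (cases i; cases j)
      fix a b assume "i = Inr a" "j = Inr b"
      then show ?thesis using i j BA init_emb_ord[OF H] by auto
    next
      fix a b assume "i = Inl a" "j = Inr b"
      then show ?thesis using i j BA b1 below_subset_Field[of "fst B'" p'] below_subset_Field[of "fst B" p] by auto
    qed auto
  next
    fix i assume i: "i \<in> below (fst (concat_word A B)) (Inr p)"
    then show "snd (concat_word A B') (map_sum id h i) = snd (concat_word A B) i"
      using BA str_witness_label[OF wB wB' h] by auto
  next
    show "snd (concat_word A B) (Inr p) < snd (concat_word A B') (Inr p')" using str_witness_less[OF wB wB' h] by simp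
  qed
  then show ?thesis using str_less_iff_str_witness[OF is_word_concat[OF wA wB] is_word_concat[OF wA wB']] by blast
qed

lemma lex_le_concat_word_left:
  assumes "is_word A" "is_word B" "is_word B'" "lex_le B B'"
  shows "lex_le (concat_word A B) (concat_word A B')"
  using assms is_prefix_concat_word_right str_less_concat_word_left unfolding lex_le_def by blast

lemma concat_prefix_before_suffix_from: assumes wv: "is_word v" and m: "m \<in> pos v"
  shows "word_iso (concat_word (prefix_before v m) (suffix_from v m)) v"
proof -
  have wo: "Well_order (fst v)" using wv by (simp add: is_word_def)
  note P = pos_concat_word[OF is_word_restrict[OF wv] is_word_restrict[OF wv]] pos_prefix_before[OF wv] pos_suffix_from[OF wv]
  let ?g = "\<lambda>i. if (m,i) \<in> fst v then Inr i else Inl i"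
  show ?thesis
  proof (rule word_isoI[where f="case_sum id id" and g="?g"])
    fix a assume "a \<in> pos (concat_word (prefix_before v m) (suffix_from v m))"
    then show "case_sum id id a \<in> pos v" "?g (case_sum id id a) = a"
      "snd v (case_sum id id a) = snd (concat_word (prefix_before v m) (suffix_from v m)) a"
      using P below_subset_Field[of "fst v" m] suffix_from_subset[of m v] by (auto simp: below_def dest: Well_order_antisym[OF wo])
  next
    fix b assume b: "b \<in> pos v"
    have "(b, m) \<in> fst v \<and> b \<noteq> m" if "(m,b) \<notin> fst v" using Well_order_total[OF wo b m] that Well_order_refl[OF wo m] by auto
    then show "?g b \<in> pos (concat_word (prefix_before v m) (suffix_from v m))" "case_sum id id (?g b) = b"
      using P by (auto simp: below_def)
  next
    fix i j assume "i \<in> pos (concat_word (prefix_before v m) (suffix_from v m))" "j \<in> pos (concat_word (prefix_before v m) (suffix_from v m))"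
    then show "((i, j) \<in> fst (concat_word (prefix_before v m) (suffix_from v m))) = ((case_sum id id i, case_sum id id j) \<in> fst v)"
      using P
      by (cases i; cases j; auto simp: below_def intro: Well_order_trans[OF wo] dest: Well_order_antisym[OF wo] Well_order_trans[OF wo])
  qed
qed

lemma prefix_map_Inl: assumes wA: "is_word A" and wB: "is_word B" shows "prefix_map A (concat_word A B) Inl"
  unfolding prefix_map_def
proof (intro conjI ballI allI impI)
  note P = pos_concat_word[OF wA wB]
  show "inj_on Inl (pos A)" by simp
  show "Inl ` pos A \<subseteq> pos (concat_word A B)" using P by auto
  show "\<And>i j. i \<in> pos A \<Longrightarrow> j \<in> pos A \<Longrightarrow> (i,j) \<in> fst A \<longleftrightarrow> (Inl i, Inl j) \<in> fst (concat_word A B)" by simp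
  show "\<And>i j. i \<in> pos A \<Longrightarrow> (j, Inl i) \<in> fst (concat_word A B) \<Longrightarrow> j \<in> Inl ` pos A"
  proof -
    fix i j assume "i \<in> pos A" "(j, Inl i) \<in> fst (concat_word A B)"
    then show "j \<in> Inl ` pos A" by (cases j) (auto intro: FieldI1)
  qed
  show "\<And>i. i \<in> pos A \<Longrightarrow> snd (concat_word A B) (Inl i) = snd A i" by simp
qed

lemma suffix_from_concat_word_Inr: assumes wA: "is_word A" and wB: "is_word B" and q: "q \<in> pos B"
  shows "word_iso (suffix_from (concat_word A B) (Inr q)) (suffix_from B q)"
proof -
  have PL: "pos (suffix_from (concat_word A B) (Inr q)) = Inr ` {j. (q,j) \<in> fst B}"
  proof -
    have "pos (suffix_from (concat_word A B) (Inr q)) = {t. (Inr q, t) \<in> fst (concat_word A B)}"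
      by (rule pos_suffix_from[OF is_word_concat[OF wA wB]])
    also have "\<dots> = Inr ` {j. (q,j) \<in> fst B}"
    proof
      show "{t. (Inr q, t) \<in> fst (concat_word A B)} \<subseteq> Inr ` {j. (q, j) \<in> fst B}"
      proof
        fix t assume "t \<in> {t. (Inr q, t) \<in> fst (concat_word A B)}"
        then show "t \<in> Inr ` {j. (q, j) \<in> fst B}" by (cases t) auto
      qed
    qed auto
    finally show ?thesis .
  qed
  have PR: "pos (suffix_from B q) = {j. (q,j) \<in> fst B}" by (rule pos_suffix_from[OF wB])
  show ?thesis
  proof (rule word_isoI[where f=projr and g=Inr])
    fix a assume "a \<in> pos (suffix_from (concat_word A B) (Inr q))"
    then show "projr a \<in> pos (suffix_from B q)" "Inr (projr a) = a" "snd (suffix_from B q) (projr a) = snd (suffix_from (concat_word A B) (Inr q)) a"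
      using PL PR by auto
  next
    fix b assume "b \<in> pos (suffix_from B q)"
    then show "Inr b \<in> pos (suffix_from (concat_word A B) (Inr q))" "projr (Inr b) = b" using PL PR by auto
  next
    fix i j assume "i \<in> pos (suffix_from (concat_word A B) (Inr q))" "j \<in> pos (suffix_from (concat_word A B) (Inr q))"
    then show "((i, j) \<in> fst (suffix_from (concat_word A B) (Inr q))) = ((projr i, projr j) \<in> fst (suffix_from B q))"
      using PL by auto
  qed
qed

lemma suffix_from_concat_word_Inl: assumes wA: "is_word A" and wB: "is_word B" and q: "q \<in> pos A"
  shows "word_iso (suffix_from (concat_word A B) (Inl q)) (concat_word (suffix_from A q) B)"
proof -
  have PL: "pos (suffix_from (concat_word A B) (Inl q)) = Inl ` {j. (q,j) \<in> fst A} \<union> Inr ` pos B"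
  proof -
    have "pos (suffix_from (concat_word A B) (Inl q)) = {t. (Inl q, t) \<in> fst (concat_word A B)}"
      by (rule pos_suffix_from[OF is_word_concat[OF wA wB]])
    also have "\<dots> = Inl ` {j. (q,j) \<in> fst A} \<union> Inr ` pos B"
    proof
      show "{t. (Inl q, t) \<in> fst (concat_word A B)} \<subseteq> Inl ` {j. (q,j) \<in> fst A} \<union> Inr ` pos B"
      proof
        fix t assume "t \<in> {t. (Inl q, t) \<in> fst (concat_word A B)}"
        then show "t \<in> Inl ` {j. (q,j) \<in> fst A} \<union> Inr ` pos B" by (cases t) auto
      qed
    qed (use q in auto)
    finally show ?thesis .
  qed
  have PR: "pos (concat_word (suffix_from A q) B) = Inl ` {j. (q,j) \<in> fst A} \<union> Inr ` pos B"
    using pos_concat_word[OF is_word_restrict[OF wA] wB] pos_suffix_from[OF wA] by simp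
  show ?thesis
  proof (rule word_isoI[where f=id and g=id])
    fix a assume "a \<in> pos (suffix_from (concat_word A B) (Inl q))"
    then show "id a \<in> pos (concat_word (suffix_from A q) B)" "id (id a) = a"
      "snd (concat_word (suffix_from A q) B) (id a) = snd (suffix_from (concat_word A B) (Inl q)) a"
      using PL PR by auto
  next
    fix b assume "b \<in> pos (concat_word (suffix_from A q) B)"
    then show "id b \<in> pos (suffix_from (concat_word A B) (Inl q))" "id (id b) = b" using PL PR by auto
  next
    fix i j assume "i \<in> pos (suffix_from (concat_word A B) (Inl q))" "j \<in> pos (suffix_from (concat_word A B) (Inl q))"
    then show "((i, j) \<in> fst (suffix_from (concat_word A B) (Inl q))) = ((id i, id j) \<in> fst (concat_word (suffix_from A q) B))"
      using PL pos_suffix_from[OF wA] q by (auto intro: FieldI2)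
  qed
qed

lemma concat_word_iso_left_imp_empty:
  assumes wy: "is_word y" and wR: "is_word R" and i: "word_iso (concat_word y R) y"
  shows "pos R = {}"
proof (rule ccontr)
  assume ne: "pos R \<noteq> {}"
  then obtain r where r: "r \<in> pos R" by blast
  obtain g where g: "iso_map (concat_word y R) y g" using i word_iso_iff_iso_map by blast
  have "(g \<circ> Inl) ` pos y = pos y" by (rule prefix_map_self_onto[OF wy prefix_map_comp[OF prefix_map_Inl[OF wy wR] iso_map_prefix_map[OF g]]])
  have P: "pos (concat_word y R) = Inl ` pos y \<union> Inr ` pos R" by (rule pos_concat_word[OF wy wR])
  have rc: "Inr r \<in> pos (concat_word y R)" using P r by auto
  have "g (Inr r) \<in> pos y" using iso_map_in[OF g rc] .
  then obtain a where a: "a \<in> pos y" "g (Inr r) = g (Inl a)" using \<open>(g \<circ> Inl) ` pos y = pos y\<close> by (metis comp_apply imageE)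
  have ac: "Inl a \<in> pos (concat_word y R)" using P a by auto
  have "Inr r = Inl a" using iso_map_inv_left[OF g rc] iso_map_inv_left[OF g ac] a(2) by metis
  then show False by simp
qed

lemma prefix_map_concat_word_image_Inl:
  assumes wA: "is_word A" and wB: "is_word B" and wY: "is_word Y"
    and f: "prefix_map (concat_word A B) Y f"
    and b0: "b0 \<in> pos B" "\<And>b. b \<in> pos B \<Longrightarrow> (b0, b) \<in> fst B"
  shows "(f \<circ> Inl) ` pos A = below (fst Y) (f (Inr b0))"
proof -
  have woB: "Well_order (fst B)" using wB by (simp add: is_word_def)
  have "below (fst B) b0 = {}"
    using b0 Well_order_antisym[OF woB] by (auto simp: below_def intro: FieldI1)
  then have BI: "below (fst (concat_word A B)) (Inr b0) = Inl ` pos A" using below_concat_Inr[OF b0(1)] by simp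
  have "Inr b0 \<in> pos (concat_word A B)" using pos_concat_word[OF wA wB] b0(1) by auto
  then have "f ` below (fst (concat_word A B)) (Inr b0) = below (fst Y) (f (Inr b0))"
    by (rule prefix_map_below[OF is_word_concat[OF wA wB] wY f])
  then have "f ` Inl ` pos A = below (fst Y) (f (Inr b0))" using BI by simp
  then show ?thesis by (simp only: image_comp)
qed

lemma word_iso_prefix_before_prefix_map_Inr:
  assumes wA: "is_word A" and wB: "is_word B" and wY: "is_word Y"
    and f: "prefix_map (concat_word A B) Y f"
    and b0: "b0 \<in> pos B" "\<And>b. b \<in> pos B \<Longrightarrow> (b0, b) \<in> fst B"
  shows "word_iso A (prefix_before Y (f (Inr b0)))"
proof -
  have woY: "Well_order (fst Y)" using wY by (simp add: is_word_def)
  have img: "(f \<circ> Inl) ` pos A = below (fst Y) (f (Inr b0))"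
    by (rule prefix_map_concat_word_image_Inl[OF wA wB wY f b0])
  have m: "f (Inr b0) \<in> pos Y"
    using init_emb_image[OF prefix_map_init_emb[OF f]] pos_concat_word[OF wA wB] b0(1) by blast
  have g: "prefix_map A Y (f \<circ> Inl)" by (rule prefix_map_comp[OF prefix_map_Inl[OF wA wB] f])
  have "(f \<circ> Inl) ` pos A \<noteq> pos Y" using img m by (auto simp: below_def)
  then obtain m' where m': "m' \<in> pos Y" "(f \<circ> Inl) ` pos A = below (fst Y) m'"
      "iso_map A (prefix_before Y m') (f \<circ> Inl)"
    using prefix_map_not_onto[OF wA wY g] by blast
  have "m' = f (Inr b0)" using below_inj[OF woY m'(1) m] m'(2) img by simp
  then show ?thesis using m'(3) word_iso_iff_iso_map by blast
qed

lemma is_prefix_suffix_from_prefix_map_Inr: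
  assumes wA: "is_word A" and wB: "is_word B" and wY: "is_word Y"
    and f: "prefix_map (concat_word A B) Y f"
    and b0: "b0 \<in> pos B" "\<And>b. b \<in> pos B \<Longrightarrow> (b0, b) \<in> fst B"
  shows "is_prefix B (suffix_from Y (f (Inr b0)))"
proof -
  let ?m = "f (Inr b0)"
  have woY: "Well_order (fst Y)" using wY by (simp add: is_word_def)
  note P = pos_concat_word[OF wA wB]
  have F: "init_emb (fst (concat_word A B)) (fst Y) (pos (concat_word A B)) f"
    by (rule prefix_map_init_emb[OF f])
  have img: "(f \<circ> Inl) ` pos A = below (fst Y) ?m"
    by (rule prefix_map_concat_word_image_Inl[OF wA wB wY f b0])
  have ord: "(i,j) \<in> fst B \<longleftrightarrow> (f (Inr i), f (Inr j)) \<in> fst Y" if "i \<in> pos B" "j \<in> pos B" for i j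
    using init_emb_ord[OF F, of "Inr i" "Inr j"] P that by auto
  have after: "(?m, f (Inr b)) \<in> fst Y" if "b \<in> pos B" for b
    using ord[OF b0(1) that] b0(2)[OF that] by blast
  show ?thesis
  proof (rule is_prefixI[OF is_word_restrict[OF wY], where f="f \<circ> Inr"])
    show "inj_on (f \<circ> Inr) (pos B)"
      using inj_on_subset[OF init_emb_inj[OF F], of "Inr ` pos B"] P by (auto simp: inj_on_def)
  next
    fix a assume "a \<in> pos B"
    then show "(f \<circ> Inr) a \<in> pos (suffix_from Y ?m)" using pos_suffix_from[OF wY] after by simp
  next
    fix i j assume "i \<in> pos B" "j \<in> pos B"
    then show "((i, j) \<in> fst B) = (((f \<circ> Inr) i, (f \<circ> Inr) j) \<in> fst (suffix_from Y ?m))"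
      using ord after by simp
  next
    fix i t assume i: "i \<in> pos B" and t: "(t, (f \<circ> Inr) i) \<in> fst (suffix_from Y ?m)"
    have mt: "(?m, t) \<in> fst Y" using t by auto
    obtain z where z: "z \<in> pos (concat_word A B)" "t = f z"
      using init_emb_image_down_closed[OF F, of "Inr i" t] t P i by auto
    show "t \<in> (f \<circ> Inr) ` pos B"
    proof (cases z)
      case (Inl a)
      then have "t \<in> below (fst Y) ?m" using img z P by auto
      then show ?thesis using mt Well_order_antisym[OF woY] by (auto simp: below_def)
    next
      case (Inr b)
      then show ?thesis using z P by auto
    qed
  next
    fix i assume "i \<in> pos B"
    then show "snd (suffix_from Y ?m) ((f \<circ> Inr) i) = snd B i"
      using prefix_map_label[OF f, of "Inr i"] P by auto
  qed
qed

lemma is_prefix_concat_word_split: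
  assumes wA: "is_word A" and wB: "is_word B" and wY: "is_word Y"
    and f: "prefix_map (concat_word A B) Y f" and ne: "pos B \<noteq> {}"
  shows "\<exists>m\<in>pos Y. word_iso A (prefix_before Y m) \<and> is_prefix B (suffix_from Y m)"
proof -
  obtain b0 where b0: "b0 \<in> pos B" "\<And>b. b \<in> pos B \<Longrightarrow> (b0, b) \<in> fst B"
    using Well_order_least[OF _ subset_refl ne] wB unfolding is_word_def by blast
  have "f (Inr b0) \<in> pos Y"
    using init_emb_image[OF prefix_map_init_emb[OF f]] pos_concat_word[OF wA wB] b0(1) by blast
  then show ?thesis
    using word_iso_prefix_before_prefix_map_Inr[OF wA wB wY f b0]
      is_prefix_suffix_from_prefix_map_Inr[OF wA wB wY f b0] by blast
qed

lemma is_prefix_concat_word_imp_iso: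
  assumes wA: "is_word A" and wv: "is_word v" and nv: "pos v \<noteq> {}"
    and pre: "is_prefix (concat_word A v) v"
  shows "word_iso (concat_word A v) v"
proof -
  obtain f where "prefix_map (concat_word A v) v f"
    using pre is_prefix_iff_prefix_map[OF wv] by blast
  then obtain m where m: "m \<in> pos v" "word_iso A (prefix_before v m)" "is_prefix v (suffix_from v m)"
    using is_prefix_concat_word_split[OF wA wv wv _ nv] by blast
  have "word_iso v (suffix_from v m)" by (rule is_prefix_suffix_from_imp_iso[OF wv m(1,3)])
  then have "word_iso (concat_word A v) (concat_word (prefix_before v m) (suffix_from v m))"
    using concat_word_cong[OF wA is_word_restrict[OF wv] wv is_word_restrict[OF wv] m(2)] by blast
  then show ?thesis using concat_prefix_before_suffix_from[OF wv m(1)] word_iso_trans by blast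
qed

lemma lex_less_concat_word_imp_str_less:
  assumes "is_word A" "is_word v" "pos v \<noteq> {}" "lex_less (concat_word A v) v"
  shows "str_less (concat_word A v) v"
  using assms is_prefix_concat_word_imp_iso unfolding lex_less_def lex_le_def by blast

section \<open>Powers\<close>

lemma power_word_simps[simp]:
  "((a,i),(b,j)) \<in> fst (power_word x \<gamma>) \<longleftrightarrow> a \<in> Field \<gamma> \<and> b \<in> Field \<gamma> \<and> i \<in> pos x \<and> j \<in> pos x \<and>
        ((a \<noteq> b \<and> (a, b) \<in> \<gamma>) \<or> (a = b \<and> (i, j) \<in> fst x))"
  "snd (power_word x \<gamma>) (a,i) = snd x i"
  by (auto simp: power_word_def)

lemma pos_power_word: assumes "is_word x" "Well_order \<gamma>"
  shows "pos (power_word x \<gamma>) = Field \<gamma> \<times> pos x"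
proof
  show "pos (power_word x \<gamma>) \<subseteq> Field \<gamma> \<times> pos x"
    by (auto simp: power_word_def Field_def)
  show "Field \<gamma> \<times> pos x \<subseteq> pos (power_word x \<gamma>)"
  proof
    fix q assume "q \<in> Field \<gamma> \<times> pos x"
    then obtain a i where q: "q = (a,i)" "a \<in> Field \<gamma>" "i \<in> pos x" by blast
    have "(i,i) \<in> fst x" using Well_order_refl[of "fst x" i] assms q by (auto simp: is_word_def)
    then have "(q,q) \<in> fst (power_word x \<gamma>)" using q by simp
    then show "q \<in> pos (power_word x \<gamma>)" by (rule FieldI1)
  qed
qed

lemma pos_power_word_Restr: assumes wx: "is_word x" and wg: "Well_order \<gamma>" and S: "S \<subseteq> Field \<gamma>"
  shows "pos (power_word x (Restr \<gamma> S)) = S \<times> pos x"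
  using pos_power_word[OF wx Well_order_Restr[OF wg]] Field_Restr_Well_order[OF wg S] by simp

lemma power_word_has_least:
  assumes wx: "is_word x" and wg: "Well_order \<gamma>"
    and A: "A \<subseteq> pos (power_word x \<gamma>)" "A \<noteq> {}"
  shows "\<exists>a\<in>A. \<forall>a'\<in>A. (a, a') \<in> fst (power_word x \<gamma>)"
proof -
  have wox: "Well_order (fst x)" using wx by (auto simp: is_word_def)
  have P: "pos (power_word x \<gamma>) = Field \<gamma> \<times> pos x" by (rule pos_power_word[OF wx wg])
  let ?r = "fst (power_word x \<gamma>)"
  have "fst ` A \<subseteq> Field \<gamma>" "fst ` A \<noteq> {}" using A P by auto
  then obtain a where a: "a \<in> fst ` A" "\<forall>s\<in>fst ` A. (a,s) \<in> \<gamma>" using Well_order_least[OF wg] by blast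
  let ?B = "{i. (a,i) \<in> A}"
  have "?B \<subseteq> pos x" "?B \<noteq> {}" using A P a(1) by auto
  then obtain i where i: "i \<in> ?B" "\<forall>s\<in>?B. (i,s) \<in> fst x" using Well_order_least[OF wox] by blast
  have "\<forall>q\<in>A. ((a,i), q) \<in> ?r"
  proof
    fix q assume q: "q \<in> A"
    obtain b j where bj: "q = (b,j)" by (cases q)
    have "b \<in> Field \<gamma>" "j \<in> pos x" using q bj A P by auto
    moreover have "a \<in> Field \<gamma>" "i \<in> pos x" using a i A P by auto
    moreover have "(a,b) \<in> \<gamma>" using a q bj by force
    moreover have "a = b \<Longrightarrow> (i,j) \<in> fst x" using i q bj by auto
    ultimately show "((a,i), q) \<in> ?r" using bj by auto
  qed
  then show ?thesis using i by auto
qed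

lemma is_word_power: assumes wx: "is_word x" and wg: "Well_order \<gamma>" shows "is_word (power_word x \<gamma>)"
proof -
  have wox: "Well_order (fst x)" using wx by (auto simp: is_word_def)
  have P: "pos (power_word x \<gamma>) = Field \<gamma> \<times> pos x" by (rule pos_power_word[OF wx wg])
  let ?r = "fst (power_word x \<gamma>)"
  show ?thesis unfolding is_word_def
  proof (rule Well_orderI)
    fix p assume "p \<in> Field ?r"
    then show "(p,p) \<in> ?r" using P Well_order_refl[OF wox] by auto
  next
    show "trans ?r" unfolding trans_def
    proof (intro allI impI)
      fix p q s assume pq: "(p,q) \<in> ?r" and qs: "(q,s) \<in> ?r"
      obtain a i where p: "p = (a,i)" by (cases p)
      obtain b j where q: "q = (b,j)" by (cases q)
      obtain c k where s: "s = (c,k)" by (cases s)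
      have A: "a \<in> Field \<gamma>" "b \<in> Field \<gamma>" "c \<in> Field \<gamma>" "i \<in> pos x" "j \<in> pos x" "k \<in> pos x"
        using pq qs p q s by auto
      have 1: "(a \<noteq> b \<and> (a, b) \<in> \<gamma>) \<or> (a = b \<and> (i, j) \<in> fst x)" using pq p q by simp
      have 2: "(b \<noteq> c \<and> (b, c) \<in> \<gamma>) \<or> (b = c \<and> (j, k) \<in> fst x)" using qs q s by simp
      have "(a \<noteq> c \<and> (a, c) \<in> \<gamma>) \<or> (a = c \<and> (i, k) \<in> fst x)"
      proof (cases "a = b")
        case True
        then show ?thesis using 1 2 Well_order_trans[OF wox, of i j k] by auto
      next
        case False
        then have ab: "(a,b) \<in> \<gamma>" using 1 by auto
        show ?thesis
        proof (cases "b = c")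
          case True then show ?thesis using ab False by auto
        next
          case F2: False
          then have bc: "(b,c) \<in> \<gamma>" using 2 by auto
          have "(a,c) \<in> \<gamma>" using Well_order_trans[OF wg ab bc] .
          moreover have "a \<noteq> c" using Well_order_antisym[OF wg ab] bc False by auto
          ultimately show ?thesis by auto
        qed
      qed
      then show "(p,s) \<in> ?r" using A p s by simp
    qed
  next
    show "antisym ?r" unfolding antisym_def
    proof (intro allI impI)
      fix p q assume "(p,q) \<in> ?r" "(q,p) \<in> ?r"
      then show "p = q" using Well_order_antisym[OF wox] Well_order_antisym[OF wg]
        by (cases p; cases q; simp) blast
    qed
  next
    fix p q assume "p \<in> Field ?r" "q \<in> Field ?r"
    then show "(p,q) \<in> ?r \<or> (q,p) \<in> ?r" using P Well_order_total[OF wox] Well_order_total[OF wg]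
      by (cases p; cases q; simp) blast
  next
    fix A assume "A \<subseteq> Field ?r" "A \<noteq> {}"
    then show "\<exists>a\<in>A. \<forall>a'\<in>A. (a, a') \<in> ?r" by (rule power_word_has_least[OF wx wg])
  qed
qed

lemma power_word_cong:
  assumes wx: "is_word x" and wg: "Well_order \<gamma>" and wg': "Well_order \<gamma>'"
    and e: "bij_betw e (Field \<gamma>) (Field \<gamma>')" and eo: "\<And>a b. a \<in> Field \<gamma> \<Longrightarrow> b \<in> Field \<gamma> \<Longrightarrow> (a,b) \<in> \<gamma> \<longleftrightarrow> (e a, e b) \<in> \<gamma>'"
  shows "word_iso (power_word x \<gamma>) (power_word x \<gamma>')"
proof -
  let ?e' = "inv_into (Field \<gamma>) e"
  have e1: "\<And>a. a \<in> Field \<gamma> \<Longrightarrow> e a \<in> Field \<gamma>'" using e by (meson bij_betw_apply)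
  have e2: "\<And>a. a \<in> Field \<gamma>' \<Longrightarrow> ?e' a \<in> Field \<gamma>" using bij_betw_inv_into[OF e] by (meson bij_betw_apply)
  have e3: "\<And>a. a \<in> Field \<gamma> \<Longrightarrow> ?e' (e a) = a" using e by (meson bij_betw_inv_into_left)
  have e4: "\<And>a. a \<in> Field \<gamma>' \<Longrightarrow> e (?e' a) = a" using e by (meson bij_betw_inv_into_right)
  have P: "pos (power_word x \<gamma>) = Field \<gamma> \<times> pos x" "pos (power_word x \<gamma>') = Field \<gamma>' \<times> pos x"
    using pos_power_word[OF wx wg] pos_power_word[OF wx wg'] .
  show ?thesis
  proof (rule word_isoI[where f="\<lambda>(b,j). (e b, j)" and g="\<lambda>(b,j). (?e' b, j)"])
    fix t assume "t \<in> pos (power_word x \<gamma>)"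
    then show "(case t of (b, j) \<Rightarrow> (e b, j)) \<in> pos (power_word x \<gamma>')"
      "(case case t of (b, j) \<Rightarrow> (e b, j) of (b, j) \<Rightarrow> (?e' b, j)) = t"
      "snd (power_word x \<gamma>') (case t of (b, j) \<Rightarrow> (e b, j)) = snd (power_word x \<gamma>) t"
      using P e1 e3 by auto
  next
    fix t assume "t \<in> pos (power_word x \<gamma>')"
    then show "(case t of (b, j) \<Rightarrow> (?e' b, j)) \<in> pos (power_word x \<gamma>)"
      "(case case t of (b, j) \<Rightarrow> (?e' b, j) of (b, j) \<Rightarrow> (e b, j)) = t"
      using P e2 e4 by auto
  next
    fix t1 t2 assume t1: "t1 \<in> pos (power_word x \<gamma>)" and t2: "t2 \<in> pos (power_word x \<gamma>)"
    obtain b1 j1 where bj1: "t1 = (b1,j1)" by (cases t1)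
    obtain b2 j2 where bj2: "t2 = (b2,j2)" by (cases t2)
    have A: "b1 \<in> Field \<gamma>" "b2 \<in> Field \<gamma>" "j1 \<in> pos x" "j2 \<in> pos x" using t1 t2 bj1 bj2 P by auto
    have "e b1 = e b2 \<longleftrightarrow> b1 = b2" using A e3 by metis
    then show "(t1,t2) \<in> fst (power_word x \<gamma>) \<longleftrightarrow>
       ((case t1 of (b, j) \<Rightarrow> (e b, j)), (case t2 of (b, j) \<Rightarrow> (e b, j))) \<in> fst (power_word x \<gamma>')"
      using bj1 bj2 A eo[OF A(1,2)] e1 by auto
  qed
qed

lemma power_word_singleton:
  assumes wx: "is_word x" and wg: "Well_order \<gamma>" and g: "Field \<gamma> = {g}"
  shows "word_iso (power_word x \<gamma>) x"
proof (rule word_isoI[where f=snd and g="\<lambda>j. (g,j)"])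
  have P: "pos (power_word x \<gamma>) = {g} \<times> pos x" using pos_power_word[OF wx wg] g by simp
  fix t assume "t \<in> pos (power_word x \<gamma>)"
  then show "snd t \<in> pos x" "(g, snd t) = t" "snd x (snd t) = snd (power_word x \<gamma>) t" using P by (cases t; auto)+
next
  have P: "pos (power_word x \<gamma>) = {g} \<times> pos x" using pos_power_word[OF wx wg] g by simp
  fix j assume "j \<in> pos x"
  then show "(g,j) \<in> pos (power_word x \<gamma>)" "snd (g,j) = j" using P by auto
next
  have P: "pos (power_word x \<gamma>) = {g} \<times> pos x" using pos_power_word[OF wx wg] g by simp
  fix t1 t2 assume "t1 \<in> pos (power_word x \<gamma>)" "t2 \<in> pos (power_word x \<gamma>)"
  then show "(t1,t2) \<in> fst (power_word x \<gamma>) \<longleftrightarrow> (snd t1, snd t2) \<in> fst x" using P g by auto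
qed

lemma is_prefix_power_word_Restr:
  assumes wx: "is_word x" and wg: "Well_order \<gamma>" and E: "E \<subseteq> Field \<gamma>"
    and dc: "\<And>a b. a \<in> E \<Longrightarrow> (b,a) \<in> \<gamma> \<Longrightarrow> b \<in> E"
  shows "is_prefix (power_word x (Restr \<gamma> E)) (power_word x \<gamma>)"
proof (rule is_prefixI[OF is_word_power[OF wx wg], where f=id])
  have PL: "pos (power_word x (Restr \<gamma> E)) = E \<times> pos x" by (rule pos_power_word_Restr[OF wx wg E])
  have P: "pos (power_word x \<gamma>) = Field \<gamma> \<times> pos x" by (rule pos_power_word[OF wx wg])
  show "inj_on id (pos (power_word x (Restr \<gamma> E)))" by simp
  show "\<And>a. a \<in> pos (power_word x (Restr \<gamma> E)) \<Longrightarrow> id a \<in> pos (power_word x \<gamma>)" using PL P E by auto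
  show "\<And>i j. i \<in> pos (power_word x (Restr \<gamma> E)) \<Longrightarrow> j \<in> pos (power_word x (Restr \<gamma> E)) \<Longrightarrow>
     (i,j) \<in> fst (power_word x (Restr \<gamma> E)) \<longleftrightarrow> (id i, id j) \<in> fst (power_word x \<gamma>)"
  proof -
    fix i j assume "i \<in> pos (power_word x (Restr \<gamma> E))" "j \<in> pos (power_word x (Restr \<gamma> E))"
    then show "(i,j) \<in> fst (power_word x (Restr \<gamma> E)) \<longleftrightarrow> (id i, id j) \<in> fst (power_word x \<gamma>)"
      using PL E Field_Restr_Well_order[OF wg E] by (cases i; cases j) auto
  qed
  show "\<And>i j. i \<in> pos (power_word x (Restr \<gamma> E)) \<Longrightarrow> (j, id i) \<in> fst (power_word x \<gamma>) \<Longrightarrow> j \<in> id ` pos (power_word x (Restr \<gamma> E))"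
  proof -
    fix i j assume i: "i \<in> pos (power_word x (Restr \<gamma> E))" and j: "(j, id i) \<in> fst (power_word x \<gamma>)"
    obtain a k where ak: "i = (a,k)" by (cases i)
    obtain b l where bl: "j = (b,l)" by (cases j)
    have "a \<in> E" using i ak PL by auto
    moreover have "(b,a) \<in> \<gamma>" "l \<in> pos x" using j ak bl Well_order_refl[OF wg] by auto
    ultimately show "j \<in> id ` pos (power_word x (Restr \<gamma> E))" using dc PL bl \<open>a \<in> E\<close> by auto
  qed
  show "\<And>i. i \<in> pos (power_word x (Restr \<gamma> E)) \<Longrightarrow> snd (power_word x \<gamma>) (id i) = snd (power_word x (Restr \<gamma> E)) i"
    by (simp add: power_word_def)
qed

lemma is_prefix_power_word:
  assumes wx: "is_word x" and wg: "Well_order \<gamma>" and a0: "a0 \<in> Field \<gamma>" and mn: "\<And>b. b \<in> Field \<gamma> \<Longrightarrow> (a0,b) \<in> \<gamma>"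
  shows "is_prefix x (power_word x \<gamma>)"
proof (rule is_prefixI[OF is_word_power[OF wx wg], where f="\<lambda>j. (a0,j)"])
  have P: "pos (power_word x \<gamma>) = Field \<gamma> \<times> pos x" by (rule pos_power_word[OF wx wg])
  show "inj_on (\<lambda>j. (a0,j)) (pos x)" by (simp add: inj_on_def)
  show "\<And>j. j \<in> pos x \<Longrightarrow> (a0,j) \<in> pos (power_word x \<gamma>)" using P a0 by auto
  show "\<And>i j. i \<in> pos x \<Longrightarrow> j \<in> pos x \<Longrightarrow> (i,j) \<in> fst x \<longleftrightarrow> ((a0,i),(a0,j)) \<in> fst (power_word x \<gamma>)"
    using a0 by auto
  show "\<And>i j. i \<in> pos x \<Longrightarrow> (j, (a0,i)) \<in> fst (power_word x \<gamma>) \<Longrightarrow> j \<in> (\<lambda>j. (a0,j)) ` pos x"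
  proof -
    fix i j assume i: "i \<in> pos x" and j: "(j, (a0,i)) \<in> fst (power_word x \<gamma>)"
    obtain b l where bl: "j = (b,l)" by (cases j)
    have "b \<in> Field \<gamma>" "l \<in> pos x" "(b \<noteq> a0 \<and> (b,a0) \<in> \<gamma>) \<or> (b = a0 \<and> (l,i) \<in> fst x)" using j bl by auto
    then have "b = a0" using mn Well_order_antisym[OF wg] by blast
    then show "j \<in> (\<lambda>j. (a0,j)) ` pos x" using bl \<open>l \<in> pos x\<close> by auto
  qed
  show "\<And>i. i \<in> pos x \<Longrightarrow> snd (power_word x \<gamma>) (a0,i) = snd x i" by simp
qed

lemma power_word_unfold:
  assumes wx: "is_word x" and wg: "Well_order \<gamma>" and a: "a \<in> Field \<gamma>"
  shows "word_iso (concat_word x (power_word x (Restr \<gamma> {b. (a,b) \<in> \<gamma> \<and> b \<noteq> a})))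
                  (power_word x (Restr \<gamma> {b. (a,b) \<in> \<gamma>}))"
proof -
  let ?G = "{b. (a,b) \<in> \<gamma> \<and> b \<noteq> a}" and ?H = "{b. (a,b) \<in> \<gamma>}"
  note FR[simp] = Field_Restr_Well_order[OF wg strict_final_segment_subset[of a \<gamma>]] Field_Restr_Well_order[OF wg final_segment_subset[of a \<gamma>]]
    pos_power_word_Restr[OF wx wg strict_final_segment_subset[of a \<gamma>]] pos_power_word_Restr[OF wx wg final_segment_subset[of a \<gamma>]]
  let ?L = "concat_word x (power_word x (Restr \<gamma> ?G))"
  let ?R = "power_word x (Restr \<gamma> ?H)"
  have PL: "pos ?L = Inl ` pos x \<union> Inr ` (?G \<times> pos x)"
    using pos_concat_word[OF wx is_word_power[OF wx Well_order_Restr[OF wg]]] pos_power_word_Restr[OF wx wg strict_final_segment_subset] by simp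
  have PR: "pos ?R = ?H \<times> pos x" by (rule pos_power_word_Restr[OF wx wg final_segment_subset])
  have aa: "(a,a) \<in> \<gamma>" using Well_order_refl[OF wg a] .
  let ?f = "case_sum (\<lambda>j. (a,j)) id"
  let ?g = "\<lambda>t. if fst t = a then Inl (snd t) else Inr t"
  show ?thesis
  proof (rule word_isoI[where f="?f" and g="?g"])
    fix s assume s: "s \<in> pos ?L"
    show "?f s \<in> pos ?R" using s PL PR aa by auto
    show "?g (?f s) = s" using s PL by auto
    show "snd ?R (?f s) = snd ?L s" using s PL by auto
  next
    fix t assume t: "t \<in> pos ?R"
    obtain b j where bj: "t = (b,j)" by (cases t)
    show "?g t \<in> pos ?L" using t bj PL PR by (cases "b = a") auto
    show "?f (?g t) = t" using bj by auto
  next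
    fix s1 s2 assume s1: "s1 \<in> pos ?L" and s2: "s2 \<in> pos ?L"
    show "(s1,s2) \<in> fst ?L \<longleftrightarrow> (?f s1, ?f s2) \<in> fst ?R"
    proof (cases s1; cases s2)
      fix j1 j2 assume "s1 = Inl j1" "s2 = Inl j2"
      then show ?thesis using s1 s2 PL aa a by auto
    next
      fix j1 t2 assume "s1 = Inl j1" "s2 = Inr t2"
      then show ?thesis using s1 s2 PL aa a by (cases t2) auto
    next
      fix t1 j2 assume "s1 = Inr t1" "s2 = Inl j2"
      then show ?thesis using s1 s2 PL aa a Well_order_antisym[OF wg] by (cases t1) auto
    next
      fix t1 t2 assume "s1 = Inr t1" "s2 = Inr t2"
      then show ?thesis using s1 s2 PL by (cases t1; cases t2) auto
    qed
  qed
qed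

lemma power_word_unfold_least:
  assumes wx: "is_word x" and wg: "Well_order \<gamma>" and a0: "a0 \<in> Field \<gamma>"
    and least: "\<And>b. b \<in> Field \<gamma> \<Longrightarrow> (a0,b) \<in> \<gamma>"
  shows "word_iso (power_word x \<gamma>)
           (concat_word x (power_word x (Restr \<gamma> {b. (a0,b) \<in> \<gamma> \<and> b \<noteq> a0})))"
  using word_iso_sym[OF power_word_unfold[OF wx wg a0]] Restr_final_segment_least[OF wg least] by simp

lemma power_word_split:
  assumes wx: "is_word x" and wg: "Well_order \<gamma>" and a: "a \<in> Field \<gamma>"
  shows "word_iso (power_word x \<gamma>)
     (concat_word (power_word x (Restr \<gamma> (below \<gamma> a))) (power_word x (Restr \<gamma> {b. (a,b) \<in> \<gamma>})))"
proof -
  let ?H = "{b. (a,b) \<in> \<gamma>}"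
  note FR[simp] = Field_Restr_Well_order[OF wg below_subset_Field[of \<gamma> a]] Field_Restr_Well_order[OF wg final_segment_subset[of a \<gamma>]]
    pos_power_word_Restr[OF wx wg below_subset_Field[of \<gamma> a]] pos_power_word_Restr[OF wx wg final_segment_subset[of a \<gamma>]]
  let ?R = "concat_word (power_word x (Restr \<gamma> (below \<gamma> a))) (power_word x (Restr \<gamma> ?H))"
  have PL: "pos (power_word x \<gamma>) = Field \<gamma> \<times> pos x" by (rule pos_power_word[OF wx wg])
  have PR: "pos ?R = Inl ` (below \<gamma> a \<times> pos x) \<union> Inr ` (?H \<times> pos x)"
    using pos_concat_word[OF is_word_power[OF wx Well_order_Restr[OF wg]] is_word_power[OF wx Well_order_Restr[OF wg]]]
      pos_power_word_Restr[OF wx wg final_segment_subset] pos_power_word_Restr[OF wx wg below_subset_Field] by simp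
  let ?f = "\<lambda>t. if (a, fst t) \<in> \<gamma> then Inr t else Inl t"
  let ?g = "case_sum id id"
  have tot: "\<And>b. b \<in> Field \<gamma> \<Longrightarrow> (a,b) \<notin> \<gamma> \<Longrightarrow> b \<in> below \<gamma> a"
    using Well_order_total[OF wg a] Well_order_refl[OF wg a] by (fastforce simp: below_def)
  have nb: "\<And>b. b \<in> below \<gamma> a \<Longrightarrow> (a,b) \<notin> \<gamma>" using Well_order_antisym[OF wg] by (auto simp: below_def)
  show ?thesis
  proof (rule word_isoI[where f="?f" and g="?g"])
    fix t assume t: "t \<in> pos (power_word x \<gamma>)"
    obtain b j where bj: "t = (b,j)" by (cases t)
    show "?f t \<in> pos ?R" using t bj PL PR tot by auto
    show "?g (?f t) = t" by auto
    show "snd ?R (?f t) = snd (power_word x \<gamma>) t" using bj by auto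
  next
    fix s assume s: "s \<in> pos ?R"
    show "?g s \<in> pos (power_word x \<gamma>)" using s PR PL below_subset_Field[of \<gamma> a] final_segment_subset[of a \<gamma>] by auto
    show "?f (?g s) = s" using s PR nb by auto
  next
    fix t1 t2 assume t1: "t1 \<in> pos (power_word x \<gamma>)" and t2: "t2 \<in> pos (power_word x \<gamma>)"
    obtain b1 j1 where bj1: "t1 = (b1,j1)" by (cases t1)
    obtain b2 j2 where bj2: "t2 = (b2,j2)" by (cases t2)
    have A: "b1 \<in> Field \<gamma>" "b2 \<in> Field \<gamma>" "j1 \<in> pos x" "j2 \<in> pos x" using t1 t2 bj1 bj2 PL by auto
    show "(t1,t2) \<in> fst (power_word x \<gamma>) \<longleftrightarrow> (?f t1, ?f t2) \<in> fst ?R"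
    proof (cases "(a,b1) \<in> \<gamma>"; cases "(a,b2) \<in> \<gamma>")
      assume "(a,b1) \<in> \<gamma>" "(a,b2) \<in> \<gamma>" then show ?thesis using bj1 bj2 A by auto
    next
      assume h: "(a,b1) \<in> \<gamma>" "(a,b2) \<notin> \<gamma>"
      then have "b2 \<in> below \<gamma> a" using tot A by blast
      then have "(b1,b2) \<notin> \<gamma>" using h Well_order_trans[OF wg] by (auto simp: below_def)
      then show ?thesis using bj1 bj2 A h by auto
    next
      assume h: "(a,b1) \<notin> \<gamma>" "(a,b2) \<in> \<gamma>"
      then have "b1 \<in> below \<gamma> a" using tot A by blast
      then have "(b1,b2) \<in> \<gamma>" "b1 \<noteq> b2" using h Well_order_trans[OF wg] by (auto simp: below_def)
      then show ?thesis using bj1 bj2 A h \<open>b1 \<in> below \<gamma> a\<close> by auto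
    next
      assume h: "(a,b1) \<notin> \<gamma>" "(a,b2) \<notin> \<gamma>"
      then have "b1 \<in> below \<gamma> a" "b2 \<in> below \<gamma> a" using tot A by blast+
      then show ?thesis using bj1 bj2 A h by auto
    qed
  qed
qed

lemma suffix_from_power_word:
  assumes wx: "is_word x" and wg: "Well_order \<gamma>" and a: "a \<in> Field \<gamma>" and i: "i \<in> pos x"
  shows "word_iso (suffix_from (power_word x \<gamma>) (a,i))
           (concat_word (suffix_from x i) (power_word x (Restr \<gamma> {b. (a,b) \<in> \<gamma> \<and> b \<noteq> a})))"
proof -
  let ?G = "{b. (a,b) \<in> \<gamma> \<and> b \<noteq> a}"
  note FR[simp] = Field_Restr_Well_order[OF wg strict_final_segment_subset[of a \<gamma>]] pos_power_word_Restr[OF wx wg strict_final_segment_subset[of a \<gamma>]] pos_suffix_from[OF wx]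
  let ?L = "suffix_from (power_word x \<gamma>) (a,i)"
  let ?R = "concat_word (suffix_from x i) (power_word x (Restr \<gamma> ?G))"
  have wP: "is_word (power_word x \<gamma>)" by (rule is_word_power[OF wx wg])
  have PL: "pos ?L = {t. ((a,i),t) \<in> fst (power_word x \<gamma>)}" by (rule pos_suffix_from[OF wP])
  have PR: "pos ?R = Inl ` {j. (i,j) \<in> fst x} \<union> Inr ` (?G \<times> pos x)"
    using pos_concat_word[OF is_word_restrict[OF wx] is_word_power[OF wx Well_order_Restr[OF wg]]]
      pos_suffix_from[OF wx] pos_power_word_Restr[OF wx wg strict_final_segment_subset] by simp
  have PL': "(b,j) \<in> pos ?L \<longleftrightarrow> b \<in> Field \<gamma> \<and> j \<in> pos x \<and> ((a \<noteq> b \<and> (a,b) \<in> \<gamma>) \<or> (a = b \<and> (i,j) \<in> fst x))" for b j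
    using PL a i by simp
  have fx: "\<And>j. (i,j) \<in> fst x \<Longrightarrow> j \<in> pos x" by (auto intro: FieldI2)
  let ?f = "\<lambda>t. if fst t = a then Inl (snd t) else Inr t"
  let ?g = "case_sum (\<lambda>j. (a,j)) id"
  show ?thesis
  proof (rule word_isoI[where f="?f" and g="?g"])
    fix t assume t: "t \<in> pos ?L"
    obtain b j where bj: "t = (b,j)" by (cases t)
    show "?f t \<in> pos ?R" using t bj PL' PR by (cases "b = a") auto
    show "?g (?f t) = t" using bj by auto
    show "snd ?R (?f t) = snd ?L t" using bj by (cases "b = a") auto
  next
    fix s assume s: "s \<in> pos ?R"
    show "?g s \<in> pos ?L"
    proof (cases s)
      case (Inl j) then show ?thesis using s PR PL' a i fx by auto
    next
      case (Inr t) then show ?thesis using s PR PL' a i by (cases t) (auto intro: FieldI2)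
    qed
    show "?f (?g s) = s" using s PR by (cases s) auto
  next
    fix t1 t2 assume t1: "t1 \<in> pos ?L" and t2: "t2 \<in> pos ?L"
    obtain b1 j1 where bj1: "t1 = (b1,j1)" by (cases t1)
    obtain b2 j2 where bj2: "t2 = (b2,j2)" by (cases t2)
    have A1: "b1 \<in> Field \<gamma>" "j1 \<in> pos x" "(a \<noteq> b1 \<and> (a,b1) \<in> \<gamma>) \<or> (a = b1 \<and> (i,j1) \<in> fst x)" using t1 bj1 PL' by auto
    have A2: "b2 \<in> Field \<gamma>" "j2 \<in> pos x" "(a \<noteq> b2 \<and> (a,b2) \<in> \<gamma>) \<or> (a = b2 \<and> (i,j2) \<in> fst x)" using t2 bj2 PL' by auto
    have "(t1,t2) \<in> fst ?L \<longleftrightarrow> (t1,t2) \<in> fst (power_word x \<gamma>)" using t1 t2 PL by simp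
    also have "\<dots> \<longleftrightarrow> (?f t1, ?f t2) \<in> fst ?R"
    proof (cases "b1 = a"; cases "b2 = a")
      assume "b1 = a" "b2 = a" then show ?thesis using bj1 bj2 A1 A2 a i by auto
    next
      assume "b1 = a" "b2 \<noteq> a" then show ?thesis using bj1 bj2 A1 A2 a i by auto
    next
      assume "b1 \<noteq> a" "b2 = a" then show ?thesis using bj1 bj2 A1 A2 a i Well_order_antisym[OF wg] by auto
    next
      assume "b1 \<noteq> a" "b2 \<noteq> a" then show ?thesis using bj1 bj2 A1 A2 a i by auto
    qed
    finally show "(t1,t2) \<in> fst ?L \<longleftrightarrow> (?f t1, ?f t2) \<in> fst ?R" .
  qed
qed

lemma power_word_final_segment_iso:
  assumes wx: "is_word x" and wg: "Well_order \<gamma>" and a: "a \<in> Field \<gamma>"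
  shows "\<exists>E. E \<subseteq> Field \<gamma> \<and> (\<forall>i j. i \<in> E \<longrightarrow> (j,i) \<in> \<gamma> \<longrightarrow> j \<in> E)
     \<and> word_iso (power_word x (Restr \<gamma> {b. (a,b) \<in> \<gamma>})) (power_word x (Restr \<gamma> E))"
proof -
  obtain e E where E: "E \<subseteq> Field \<gamma>" "\<forall>i j. i \<in> E \<longrightarrow> (j,i) \<in> \<gamma> \<longrightarrow> j \<in> E"
    and b: "bij_betw e {b. (a,b) \<in> \<gamma>} E"
    and o: "\<forall>i\<in>{b. (a,b) \<in> \<gamma>}. \<forall>j\<in>{b. (a,b) \<in> \<gamma>}. (i,j) \<in> \<gamma> \<longleftrightarrow> (e i, e j) \<in> \<gamma>"
    using final_segment_iso_initial_segment[OF wg a] by blast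
  have F1: "Field (Restr \<gamma> {b. (a,b) \<in> \<gamma>}) = {b. (a,b) \<in> \<gamma>}" by (rule Field_Restr_Well_order[OF wg final_segment_subset])
  have F2: "Field (Restr \<gamma> E) = E" by (rule Field_Restr_Well_order[OF wg E(1)])
  have eE: "\<And>i. i \<in> {b. (a,b) \<in> \<gamma>} \<Longrightarrow> e i \<in> E" using b by (meson bij_betw_apply)
  have "word_iso (power_word x (Restr \<gamma> {b. (a,b) \<in> \<gamma>})) (power_word x (Restr \<gamma> E))"
  proof (rule power_word_cong[OF wx Well_order_Restr[OF wg] Well_order_Restr[OF wg]])
    show "bij_betw e (Field (Restr \<gamma> {b. (a, b) \<in> \<gamma>})) (Field (Restr \<gamma> E))" using b F1 F2 by simp
    fix i j assume "i \<in> Field (Restr \<gamma> {b. (a, b) \<in> \<gamma>})" "j \<in> Field (Restr \<gamma> {b. (a, b) \<in> \<gamma>})"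
    then have ij: "i \<in> {b. (a,b) \<in> \<gamma>}" "j \<in> {b. (a,b) \<in> \<gamma>}" using F1 by auto
    then show "((i, j) \<in> Restr \<gamma> {b. (a, b) \<in> \<gamma>}) = ((e i, e j) \<in> Restr \<gamma> E)"
    proof -
      have "(i,j) \<in> \<gamma> \<longleftrightarrow> (e i, e j) \<in> \<gamma>" using o ij by blast
      then show ?thesis using eE[OF ij(1)] eE[OF ij(2)] ij by blast
    qed
  qed
  then show ?thesis using E by blast
qed

lemma power_word_final_segment_cases:
  assumes wx: "is_word x" and wg: "Well_order \<gamma>" and a: "a \<in> Field \<gamma>"
  obtains "word_iso (power_word x (Restr \<gamma> {b. (a,b) \<in> \<gamma>})) (power_word x \<gamma>)"
    | a1 where "a1 \<in> Field \<gamma>"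
      "word_iso (power_word x (Restr \<gamma> {b. (a,b) \<in> \<gamma>})) (power_word x (Restr \<gamma> (below \<gamma> a1)))"
proof -
  obtain E where E: "E \<subseteq> Field \<gamma>" "\<forall>i j. i \<in> E \<longrightarrow> (j,i) \<in> \<gamma> \<longrightarrow> j \<in> E"
    and iE: "word_iso (power_word x (Restr \<gamma> {b. (a,b) \<in> \<gamma>})) (power_word x (Restr \<gamma> E))"
    using power_word_final_segment_iso[OF wx wg a] by blast
  show thesis
  proof (cases "E = Field \<gamma>")
    case True
    then show thesis using that(1) iE by (simp add: Restr_Field)
  next
    case False
    then show thesis using that(2) iE down_closed_eq_below[OF wg E] by blast
  qed
qed

lemma is_prefix_power_word_final_segment:
  assumes wx: "is_word x" and wg: "Well_order \<gamma>" and a: "a \<in> Field \<gamma>"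
  shows "is_prefix (power_word x (Restr \<gamma> {b. (a,b) \<in> \<gamma>})) (power_word x \<gamma>)"
proof -
  obtain E where E: "E \<subseteq> Field \<gamma>" "\<forall>i j. i \<in> E \<longrightarrow> (j,i) \<in> \<gamma> \<longrightarrow> j \<in> E"
    and i: "word_iso (power_word x (Restr \<gamma> {b. (a,b) \<in> \<gamma>})) (power_word x (Restr \<gamma> E))"
    using power_word_final_segment_iso[OF wx wg a] by blast
  have "is_prefix (power_word x (Restr \<gamma> E)) (power_word x \<gamma>)"
    using is_prefix_power_word_Restr[OF wx wg E(1)] E(2) by blast
  then show ?thesis
    using is_prefix_iso_left[OF is_word_power[OF wx Well_order_Restr[OF wg]] is_word_power[OF wx wg] i] by blast
qed

lemma suffix_from_power_word_block:
  assumes wy: "is_word y" and wg: "Well_order \<gamma>" and g: "g \<in> Field \<gamma>"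
    and i0: "i0 \<in> pos y" "\<And>j. j \<in> pos y \<Longrightarrow> (i0,j) \<in> fst y"
  shows "word_iso (suffix_from (power_word y \<gamma>) (g,i0)) (power_word y (Restr \<gamma> {b. (g,b) \<in> \<gamma>}))"
proof -
  have "suffix_from y i0 = y" by (rule suffix_from_least[OF i0(2)])
  then have "word_iso (suffix_from (power_word y \<gamma>) (g,i0))
      (concat_word y (power_word y (Restr \<gamma> {b. (g,b) \<in> \<gamma> \<and> b \<noteq> g})))"
    using suffix_from_power_word[OF wy wg g i0(1)] by simp
  then show ?thesis using power_word_unfold[OF wy wg g] word_iso_trans by blast
qed

lemma suffix_from_power_word_greatest_block:
  assumes wy: "is_word y" and wg: "Well_order \<gamma>"
    and gm: "gm \<in> Field \<gamma>" "\<And>g. g \<in> Field \<gamma> \<Longrightarrow> (g,gm) \<in> \<gamma>"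
    and i0: "i0 \<in> pos y" "\<And>j. j \<in> pos y \<Longrightarrow> (i0,j) \<in> fst y"
  shows "word_iso (suffix_from (power_word y \<gamma>) (gm,i0)) y"
proof -
  have "{b. (gm,b) \<in> \<gamma>} = {gm}"
    using gm Well_order_antisym[OF wg] Well_order_refl[OF wg] by (auto intro: FieldI2)
  then have "Field (Restr \<gamma> {b. (gm,b) \<in> \<gamma>}) = {gm}"
    using Field_Restr_Well_order[OF wg final_segment_subset, of gm] by (simp only:)
  then have "word_iso (power_word y (Restr \<gamma> {b. (gm,b) \<in> \<gamma>})) y"
    by (rule power_word_singleton[OF wy Well_order_Restr[OF wg]])
  then show ?thesis using suffix_from_power_word_block[OF wy wg gm(1) i0] word_iso_trans by blast
qed

lemma is_prefix_suffix_from_power_word_block: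
  assumes wy: "is_word y" and wg: "Well_order \<gamma>" and g: "g \<in> Field \<gamma>"
    and i0: "i0 \<in> pos y" "\<And>j. j \<in> pos y \<Longrightarrow> (i0,j) \<in> fst y"
  shows "is_prefix (suffix_from (power_word y \<gamma>) (g,i0)) (power_word y \<gamma>)"
  by (rule is_prefix_iso_left[OF is_word_power[OF wy Well_order_Restr[OF wg]] is_word_power[OF wy wg]
        suffix_from_power_word_block[OF wy wg g i0] is_prefix_power_word_final_segment[OF wy wg g]])

lemma power_word_not_lex_le_base:
  assumes wy: "is_word y" and wg: "Well_order \<gamma>" and ny: "pos y \<noteq> {}"
    and g1: "g1 \<in> Field \<gamma>" and g2: "g2 \<in> Field \<gamma>" and g12: "g1 \<noteq> g2"
  shows "\<not> lex_le (power_word y \<gamma>) y"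
proof
  assume le: "lex_le (power_word y \<gamma>) y"
  obtain g0 where g0: "g0 \<in> Field \<gamma>" "\<And>b. b \<in> Field \<gamma> \<Longrightarrow> (g0,b) \<in> \<gamma>"
    using Well_order_least[OF wg subset_refl] g1 by blast
  let ?R = "power_word y (Restr \<gamma> {b. (g0,b) \<in> \<gamma> \<and> b \<noteq> g0})"
  have wY: "is_word (power_word y \<gamma>)" and wR: "is_word ?R"
    using is_word_power[OF wy] wg Well_order_Restr[OF wg] by blast+
  have "word_iso (power_word y \<gamma>) y"
    by (rule lex_le_is_prefix_imp_iso[OF wY wy le is_prefix_power_word[OF wy wg g0]])
  then have "word_iso (concat_word y ?R) y"
    using power_word_unfold_least[OF wy wg g0] word_iso_sym word_iso_trans by blast
  then have "pos ?R = {}" by (rule concat_word_iso_left_imp_empty[OF wy wR])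
  moreover obtain g where "g \<in> Field \<gamma>" "g \<noteq> g0" using g1 g2 g12 by blast
  ultimately show False
    using pos_power_word_Restr[OF wy wg strict_final_segment_subset] g0(2) ny by auto
qed

section \<open>Prime words\<close>

lemma prime_word_nonempty:
  assumes "prime_word (x :: ('p,'a::linorder) word)" shows "pos x \<noteq> {}"
proof
  assume e: "pos x = {}"
  let ?y = "({} :: 'p rel, snd x)"
  have wy: "is_word ?y" by (simp add: is_word_def)
  have wE: "Well_order ({} :: 'p rel)" by simp
  have pe: "pos (power_word ?y ({} :: 'p rel)) = {}" using pos_power_word[OF wy wE] by simp
  have "word_iso (power_word ?y ({} :: 'p rel)) x"
    by (rule word_isoI[where f="\<lambda>_. undefined" and g="\<lambda>_. undefined"]) (use pe e in auto)
  then have "card (Field ({} :: 'p rel)) = 1" using assms wy wE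
    unfolding prime_word_def primitive_def by blast
  then show False by simp
qed

lemma prime_word_lex_le_suffix_from:
  assumes wx: "is_word x" and px: "prime_word x" and j: "j \<in> pos x"
  shows "lex_le x (suffix_from x j)"
proof (cases "\<exists>q\<in>pos x. q \<noteq> j \<and> (q, j) \<in> fst x")
  case True then show ?thesis using px j unfolding prime_word_def by blast
next
  case False
  have wo: "Well_order (fst x)" using wx by (simp add: is_word_def)
  have "(j, i) \<in> fst x" if i: "i \<in> pos x" for i
  proof (cases "i = j")
    case True then show ?thesis using Well_order_refl[OF wo j] by simp
  next
    case F: False then show ?thesis using False Well_order_total[OF wo j i] i by blast
  qed
  then have "suffix_from x j = x" by (rule suffix_from_least)
  then show ?thesis using is_prefix_refl[OF wx] by (simp add: lex_le_def)
qed

lemma power_word_single_block: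
  fixes y :: "('p, 'a::linorder) word"
  assumes wy: "is_word y" and wg: "Well_order \<gamma>"
    and le: "\<And>p. p \<in> pos (power_word y \<gamma>) \<Longrightarrow> lex_le (power_word y \<gamma>) (suffix_from (power_word y \<gamma>) p)"
    and q0: "q0 \<in> pos (power_word y \<gamma>)"
    and unbordered: "\<And>p. (q0,p) \<in> fst (power_word y \<gamma>) \<Longrightarrow> p \<noteq> q0 \<Longrightarrow>
      \<not> is_prefix (power_word y \<gamma>) (suffix_from (power_word y \<gamma>) p)"
  shows "\<exists>g. Field \<gamma> = {g}"
proof (rule ccontr)
  assume not_single: "\<nexists>g. Field \<gamma> = {g}"
  let ?Y = "power_word y \<gamma>"
  have wY: "is_word ?Y" by (rule is_word_power[OF wy wg])
  obtain g i where q0gi: "q0 = (g,i)" and g: "g \<in> Field \<gamma>" and i: "i \<in> pos y"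
    using q0 pos_power_word[OF wy wg] by auto
  obtain i0 where i0: "i0 \<in> pos y" "\<And>j. j \<in> pos y \<Longrightarrow> (i0,j) \<in> fst y"
    using Well_order_least[OF _ subset_refl] wy i unfolding is_word_def by blast
  have i0Y: "(g',i0) \<in> pos ?Y" if "g' \<in> Field \<gamma>" for g'
    using pos_power_word[OF wy wg] that i0(1) by simp
  show False
  proof (cases "\<exists>gm\<in>Field \<gamma>. \<forall>g\<in>Field \<gamma>. (g,gm) \<in> \<gamma>")
    case True
    \<comment> \<open>the suffix starting at the last block is y, which is a proper prefix of y^\<gamma>\<close>
    then obtain gm where gm: "gm \<in> Field \<gamma>" "\<And>g. g \<in> Field \<gamma> \<Longrightarrow> (g,gm) \<in> \<gamma>" by blast
    obtain g2 where "g2 \<in> Field \<gamma>" "g2 \<noteq> g" using not_single g by blast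
    have "lex_le ?Y y"
      by (rule lex_le_iso_right[OF wY is_word_restrict[OF wY] wy
            suffix_from_power_word_greatest_block[OF wy wg gm i0] le[OF i0Y[OF gm(1)]]])
    then show False using power_word_not_lex_le_base[OF wy wg _ g] \<open>g2 \<in> Field \<gamma>\<close> \<open>g2 \<noteq> g\<close> i by blast
  next
    case False
    \<comment> \<open>a later block starts a suffix that is again a prefix of y^\<gamma>\<close>
    then obtain g' where g': "g' \<in> Field \<gamma>" "(g',g) \<notin> \<gamma>" using g by blast
    then have "(g,g') \<in> \<gamma>" "g \<noteq> g'" using Well_order_total[OF wg g] Well_order_refl[OF wg g] by auto
    then have after: "(q0, (g',i0)) \<in> fst ?Y" and "(g',i0) \<noteq> q0" using q0gi g g' i i0 by auto
    have Z: "is_word (suffix_from ?Y (g',i0))" by (rule is_word_restrict[OF wY])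
    have "word_iso ?Y (suffix_from ?Y (g',i0))"
      by (rule lex_le_is_prefix_imp_iso[OF wY Z le[OF i0Y[OF g'(1)]]
            is_prefix_suffix_from_power_word_block[OF wy wg g'(1) i0]])
    then show False using unbordered[OF after \<open>(g',i0) \<noteq> q0\<close>] word_iso_imp_is_prefix[OF Z] by blast
  qed
qed

lemma primitiveI:
  fixes w :: "('p, 'a::linorder) word"
  assumes ww: "is_word w"
    and le: "\<And>p. p \<in> pos w \<Longrightarrow> lex_le w (suffix_from w p)"
    and q0: "q0 \<in> pos w"
    and unbordered: "\<And>p. (q0,p) \<in> fst w \<Longrightarrow> p \<noteq> q0 \<Longrightarrow> \<not> is_prefix w (suffix_from w p)"
  shows "primitive w"
  unfolding primitive_def
proof (intro allI impI)
  fix y :: "('p,'a) word" and \<gamma> :: "'p rel"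
  assume "is_word y \<and> Well_order \<gamma> \<and> word_iso (power_word y \<gamma>) w"
  then have wy: "is_word y" and wg: "Well_order \<gamma>" and Yw: "word_iso (power_word y \<gamma>) w" by blast+
  let ?Y = "power_word y \<gamma>"
  have wY: "is_word ?Y" by (rule is_word_power[OF wy wg])
  obtain \<phi> where \<phi>: "iso_map ?Y w \<phi>" using Yw word_iso_iff_iso_map by blast
  let ?\<psi> = "inv_into (pos ?Y) \<phi>"
  have sfx: "word_iso (suffix_from ?Y p) (suffix_from w (\<phi> p))" if "p \<in> pos ?Y" for p
    by (rule suffix_from_iso_map[OF wY ww \<phi> that])
  have "\<exists>g. Field \<gamma> = {g}"
  proof (rule power_word_single_block[OF wy wg _ iso_map_inv_in[OF \<phi> q0]])
    fix p assume p: "p \<in> pos ?Y"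
    have "lex_le ?Y (suffix_from w (\<phi> p))"
      by (rule lex_le_iso_left[OF ww is_word_restrict[OF ww] wY word_iso_sym[OF Yw] le[OF iso_map_in[OF \<phi> p]]])
    then show "lex_le ?Y (suffix_from ?Y p)"
      by (rule lex_le_iso_right[OF wY is_word_restrict[OF ww] is_word_restrict[OF wY] word_iso_sym[OF sfx[OF p]]])
  next
    fix p assume after: "(?\<psi> q0, p) \<in> fst ?Y" and ne: "p \<noteq> ?\<psi> q0"
    have p: "p \<in> pos ?Y" using after by (rule FieldI2)
    have "(q0, \<phi> p) \<in> fst w" and "\<phi> p \<noteq> q0"
      using after ne iso_map_ord[OF \<phi> iso_map_inv_in[OF \<phi> q0] p] iso_map_inv_right[OF \<phi> q0]
        iso_map_inv_left[OF \<phi> p] by auto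
    then have "\<not> is_prefix w (suffix_from w (\<phi> p))" by (rule unbordered)
    then show "\<not> is_prefix ?Y (suffix_from ?Y p)"
      using is_prefix_iso_left[OF wY is_word_restrict[OF wY] word_iso_sym[OF Yw]]
        is_prefix_iso_right[OF is_word_restrict[OF wY] is_word_restrict[OF ww] _ sfx[OF p]] by blast
  qed
  then show "card (Field \<gamma>) = 1 \<and> word_iso y w"
    using word_iso_trans[OF word_iso_sym[OF power_word_singleton[OF wy wg]] Yw] by auto
qed

lemma prime_wordI:
  assumes ww: "is_word w"
    and le: "\<And>p. p \<in> pos w \<Longrightarrow> lex_le w (suffix_from w p)"
    and q0: "q0 \<in> pos w"
    and unbordered: "\<And>p. (q0,p) \<in> fst w \<Longrightarrow> p \<noteq> q0 \<Longrightarrow> \<not> is_prefix w (suffix_from w p)"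
  shows "prime_word w"
  unfolding prime_word_def
proof (intro conjI ballI impI)
  show "primitive w" by (rule primitiveI[OF assms])
  fix p assume "p \<in> pos w"
  then show "lex_le w (suffix_from w p)" by (rule le)
qed

lemma lex_le_suffix_from_power_word:
  assumes wv: "is_word v" and pv: "prime_word v" and wb: "Well_order \<beta>"
    and q: "q \<in> pos (power_word v \<beta>)"
  shows "lex_le v (suffix_from (power_word v \<beta>) q)"
proof -
  obtain b j where bj: "q = (b,j)" "b \<in> Field \<beta>" "j \<in> pos v"
    using q pos_power_word[OF wv wb] by auto
  let ?S = "suffix_from v j" and ?R = "power_word v (Restr \<beta> {c. (b,c) \<in> \<beta> \<and> c \<noteq> b})"
  have wS: "is_word ?S" and wZ: "is_word (suffix_from (power_word v \<beta>) q)"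
    using is_word_restrict wv is_word_power[OF wv wb] by blast+
  have wR: "is_word ?R" by (rule is_word_power[OF wv Well_order_Restr[OF wb]])
  have "word_iso (concat_word ?S ?R) (suffix_from (power_word v \<beta>) q)"
    using word_iso_sym[OF suffix_from_power_word[OF wv wb bj(2,3)]] bj(1) by simp
  then have "is_prefix ?S (suffix_from (power_word v \<beta>) q)"
    using is_prefix_iso_right[OF is_word_concat[OF wS wR] wZ is_prefix_concat_word[OF wS wR]] by blast
  then show ?thesis
    using lex_le_is_prefix_trans[OF wv wS wZ prime_word_lex_le_suffix_from[OF wv pv bj(3)]] by blast
qed

lemma str_less_or_iso_concat_word_prefix_before:
  assumes wP: "is_word P" and wv: "is_word v" and pv: "prime_word v"
    and m: "m \<in> pos v" and Pm: "word_iso P (prefix_before v m)"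
  shows "str_less (concat_word P v) v \<or> word_iso (concat_word P v) v"
proof -
  have wpf: "is_word (prefix_before v m)" and wsf: "is_word (suffix_from v m)"
    using is_word_restrict[OF wv] by blast+
  have dv: "word_iso (concat_word P (suffix_from v m)) v"
    using concat_word_cong[OF wP wpf wsf wsf Pm word_iso_refl] concat_prefix_before_suffix_from[OF wv m]
      word_iso_trans by blast
  consider "str_less v (suffix_from v m)" | "is_prefix v (suffix_from v m)"
    using prime_word_lex_le_suffix_from[OF wv pv m] unfolding lex_le_def by blast
  then show ?thesis
  proof cases
    case 1
    then show ?thesis
      using str_less_iso_right[OF is_word_concat[OF wP wv] is_word_concat[OF wP wsf] wv dv]
        str_less_concat_word_left[OF wP wv wsf] by blast
  next
    case 2
    then have "word_iso v (suffix_from v m)" by (rule is_prefix_suffix_from_imp_iso[OF wv m])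
    then have "word_iso (concat_word P v) (concat_word P (suffix_from v m))"
      by (rule concat_word_cong[OF wP wP wv wsf word_iso_refl])
    then show ?thesis using dv word_iso_trans by blast
  qed
qed

lemma str_less_or_iso_concat_word_prefix:
  assumes wP: "is_word P" and wX: "is_word X" and wv: "is_word v" and pv: "prime_word v"
    and PX: "is_prefix P X" and Xv: "str_less X v"
  shows "str_less (concat_word P v) v \<or> word_iso (concat_word P v) v"
proof -
  obtain f where f: "prefix_map P X f" using PX is_prefix_iff_prefix_map[OF wX] by blast
  obtain p p' h where h: "str_witness X v p p' h" using Xv str_less_iff_str_witness[OF wX wv] by blast
  show ?thesis
  proof (cases "p \<in> f ` pos P")
    case True
    then obtain r where "r \<in> pos P" "p = f r" by blast
    then have "str_witness P v r p' (h \<circ> f)" by (rule str_witness_restrict[OF wP wX wv f h])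
    then have "str_less P v" using str_less_iff_str_witness[OF wP wv] by blast
    then show ?thesis
      using str_less_is_prefix_mono[OF wP wv is_word_concat[OF wP wv] wv _ is_prefix_concat_word[OF wP wv]
          is_prefix_refl[OF wv]] by blast
  next
    case False
    \<comment> \<open>the mismatch lies beyond P, so P is a proper prefix of v\<close>
    have g: "prefix_map P v (h \<circ> f)" and gi: "(h \<circ> f) ` pos P \<subseteq> below (fst v) p'"
      using str_witness_prefix_map[OF wP wX wv f h False] by blast+
    have "(h \<circ> f) ` pos P \<noteq> pos v"
      using gi str_witness_pos'[OF wX wv h] by (auto simp: below_def)
    then obtain m where "m \<in> pos v" "iso_map P (prefix_before v m) (h \<circ> f)"
      using prefix_map_not_onto[OF wP wv g] by blast
    then show ?thesis
      using str_less_or_iso_concat_word_prefix_before[OF wP wv pv] word_iso_iff_iso_map by blast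
  qed
qed

lemma lex_le_concat_word_of_str_less_or_iso:
  assumes wP: "is_word P" and wv: "is_word v" and wR: "is_word R"
    and cmp: "str_less (concat_word P v) v \<or> word_iso (concat_word P v) v"
  shows "lex_le (concat_word P (concat_word v R)) (concat_word v R)"
proof -
  let ?D = "concat_word P v"
  have wD: "is_word ?D" and wvR: "is_word (concat_word v R)" using is_word_concat wP wv wR by blast+
  have wDR: "is_word (concat_word ?D R)" by (rule is_word_concat[OF wD wR])
  have "lex_le (concat_word ?D R) (concat_word v R)"
    using cmp
  proof
    assume "str_less ?D v"
    then show ?thesis using str_less_is_prefix_mono[OF wD wv wDR wvR _ is_prefix_concat_word[OF wD wR]
        is_prefix_concat_word[OF wv wR]] unfolding lex_le_def by blast
  next
    assume "word_iso ?D v"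
    then have "word_iso (concat_word ?D R) (concat_word v R)"
      by (rule concat_word_cong[OF wD wv wR wR _ word_iso_refl])
    then show ?thesis using word_iso_imp_is_prefix[OF wvR] unfolding lex_le_def by blast
  qed
  then show ?thesis
    by (rule lex_le_iso_left[OF wDR wvR is_word_concat[OF wP wvR] concat_word_assoc[OF wP wv wR]])
qed

lemma str_less_suffix_from_concat_word_Inr:
  assumes wU: "is_word U" and wv: "is_word v" and wV: "is_word V"
    and less: "str_less (concat_word U v) v" and vV: "is_prefix v V"
    and q: "q \<in> pos V" and le: "lex_le v (suffix_from V q)"
  shows "str_less (concat_word U V) (suffix_from (concat_word U V) (Inr q))"
proof -
  let ?w = "concat_word U V" and ?X = "concat_word U v"
  have ww: "is_word ?w" and wX: "is_word ?X" using is_word_concat wU wv wV by blast+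
  have wS: "is_word (suffix_from V q)" and wZ: "is_word (suffix_from ?w (Inr q))"
    using is_word_restrict wV ww by blast+
  have "lex_le v (suffix_from ?w (Inr q))"
    by (rule lex_le_iso_right[OF wv wS wZ word_iso_sym[OF suffix_from_concat_word_Inr[OF wU wV q]] le])
  then have "str_less ?X (suffix_from ?w (Inr q))" by (rule str_less_lex_le_trans[OF wX wv wZ less])
  then show ?thesis
    by (rule str_less_is_prefix_mono[OF wX wZ ww wZ _ is_prefix_concat_word_right[OF wU wv wV vV]
          is_prefix_refl[OF wZ]])
qed

lemma power_word_final_segment_concat_lex_le:
  assumes wu: "is_word u" and wa: "Well_order \<alpha>" and wv: "is_word v" and pv: "prime_word v"
    and wb: "Well_order \<beta>" and nb: "Field \<beta> \<noteq> {}"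
    and less: "str_less (concat_word (power_word u \<alpha>) v) v" and a1: "a1 \<in> Field \<alpha>"
  shows "lex_le (concat_word (power_word u (Restr \<alpha> {b. (a1,b) \<in> \<alpha>})) (power_word v \<beta>)) (power_word v \<beta>)"
proof -
  let ?U = "power_word u \<alpha>" and ?P = "power_word u (Restr \<alpha> {b. (a1,b) \<in> \<alpha>})"
  obtain b0 where b0: "b0 \<in> Field \<beta>" "\<And>b. b \<in> Field \<beta> \<Longrightarrow> (b0,b) \<in> \<beta>"
    using Well_order_least[OF wb subset_refl nb] by blast
  let ?R = "power_word v (Restr \<beta> {c. (b0,c) \<in> \<beta> \<and> c \<noteq> b0})"
  have wU: "is_word ?U" and wP: "is_word ?P" and wR: "is_word ?R" and wV: "is_word (power_word v \<beta>)"
    using is_word_power wu wv wa wb Well_order_Restr by blast+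
  have wX: "is_word (concat_word ?U v)" and wvR: "is_word (concat_word v ?R)"
    using is_word_concat wU wv wR by blast+
  have "is_prefix ?P (concat_word ?U v)"
    by (rule is_prefix_trans[OF wU wX is_prefix_power_word_final_segment[OF wu wa a1] is_prefix_concat_word[OF wU wv]])
  then have "lex_le (concat_word ?P (concat_word v ?R)) (concat_word v ?R)"
    using lex_le_concat_word_of_str_less_or_iso[OF wP wv wR]
      str_less_or_iso_concat_word_prefix[OF wP wX wv pv _ less] by blast
  moreover have Viso: "word_iso (power_word v \<beta>) (concat_word v ?R)"
    by (rule power_word_unfold_least[OF wv wb b0])
  ultimately show ?thesis
    using lex_le_iso_left[OF is_word_concat[OF wP wvR] wvR is_word_concat[OF wP wV]]
      lex_le_iso_right[OF is_word_concat[OF wP wV] wvR wV]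
      concat_word_cong[OF wP wP wvR wV word_iso_refl word_iso_sym[OF Viso]] word_iso_sym[OF Viso]
    by blast
qed

lemma lex_le_concat_power_word_final_segment:
  assumes wu: "is_word u" and wa: "Well_order \<alpha>" and wV: "is_word V" and a: "a \<in> Field \<alpha>"
    and step: "\<And>a1. a1 \<in> Field \<alpha> \<Longrightarrow>
      lex_le (concat_word (power_word u (Restr \<alpha> {b. (a1,b) \<in> \<alpha>})) V) V"
  shows "lex_le (concat_word (power_word u \<alpha>) V)
           (concat_word (power_word u (Restr \<alpha> {b. (a,b) \<in> \<alpha>})) V)"
proof -
  let ?U = "power_word u \<alpha>" and ?Pa = "power_word u (Restr \<alpha> {b. (a,b) \<in> \<alpha>})"
  have wU: "is_word ?U" and wPa: "is_word ?Pa"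
    using is_word_power wu wa Well_order_Restr[OF wa] by blast+
  have wUV: "is_word (concat_word ?U V)" and wPaV: "is_word (concat_word ?Pa V)"
    using is_word_concat wU wPa wV by blast+
  show ?thesis
    using power_word_final_segment_cases[OF wu wa a]
  proof cases
    case 1
    then have "word_iso (concat_word ?Pa V) (concat_word ?U V)"
      by (rule concat_word_cong[OF wPa wU wV wV _ word_iso_refl])
    then show ?thesis using word_iso_imp_is_prefix[OF wPaV] word_iso_sym unfolding lex_le_def by blast
  next
    case (2 a1)
    let ?P1 = "power_word u (Restr \<alpha> (below \<alpha> a1))" and ?P2 = "power_word u (Restr \<alpha> {b. (a1,b) \<in> \<alpha>})"
    have wP1: "is_word ?P1" and wP2: "is_word ?P2" using is_word_power[OF wu Well_order_Restr[OF wa]] by blast+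
    have wP2V: "is_word (concat_word ?P2 V)" and wP1V: "is_word (concat_word ?P1 V)"
      using is_word_concat wP1 wP2 wV by blast+
    have wP12V: "is_word (concat_word ?P1 (concat_word ?P2 V))" by (rule is_word_concat[OF wP1 wP2V])
    have "word_iso (concat_word ?U V) (concat_word (concat_word ?P1 ?P2) V)"
      by (rule concat_word_cong[OF wU is_word_concat[OF wP1 wP2] wV wV power_word_split[OF wu wa 2(1)] word_iso_refl])
    then have Uiso: "word_iso (concat_word ?U V) (concat_word ?P1 (concat_word ?P2 V))"
      using concat_word_assoc[OF wP1 wP2 wV] word_iso_trans by blast
    have Paiso: "word_iso (concat_word ?Pa V) (concat_word ?P1 V)"
      by (rule concat_word_cong[OF wPa wP1 wV wV 2(2) word_iso_refl])
    have "lex_le (concat_word ?P1 (concat_word ?P2 V)) (concat_word ?P1 V)"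
      by (rule lex_le_concat_word_left[OF wP1 wP2V wV step[OF 2(1)]])
    then show ?thesis
      using lex_le_iso_left[OF wP12V wP1V wUV word_iso_sym[OF Uiso]]
        lex_le_iso_right[OF wUV wP1V wPaV word_iso_sym[OF Paiso]] by blast
  qed
qed

lemma suffix_from_concat_power_word_Inl:
  assumes wu: "is_word u" and wa: "Well_order \<alpha>" and wV: "is_word V"
    and a: "a \<in> Field \<alpha>" and i: "i \<in> pos u"
  shows "word_iso (suffix_from (concat_word (power_word u \<alpha>) V) (Inl (a,i)))
           (concat_word (concat_word (suffix_from u i) (power_word u (Restr \<alpha> {b. (a,b) \<in> \<alpha> \<and> b \<noteq> a}))) V)"
proof -
  let ?U = "power_word u \<alpha>"
  let ?SR = "concat_word (suffix_from u i) (power_word u (Restr \<alpha> {b. (a,b) \<in> \<alpha> \<and> b \<noteq> a}))"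
  have wU: "is_word ?U" by (rule is_word_power[OF wu wa])
  have wSR: "is_word ?SR"
    by (rule is_word_concat[OF is_word_restrict[OF wu] is_word_power[OF wu Well_order_Restr[OF wa]]])
  have q: "(a,i) \<in> pos ?U" using pos_power_word[OF wu wa] a i by simp
  have "word_iso (concat_word (suffix_from ?U (a,i)) V) (concat_word ?SR V)"
    by (rule concat_word_cong[OF is_word_restrict[OF wU] wSR wV wV suffix_from_power_word[OF wu wa a i] word_iso_refl])
  then show ?thesis using suffix_from_concat_word_Inl[OF wU wV q] word_iso_trans by blast
qed

lemma lex_le_suffix_from_concat_word_Inl:
  assumes wu: "is_word u" and pu: "prime_word u" and wa: "Well_order \<alpha>" and wV: "is_word V"
    and q: "q \<in> pos (power_word u \<alpha>)"
    and final: "\<And>a. a \<in> Field \<alpha> \<Longrightarrow> lex_le (concat_word (power_word u \<alpha>) V)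
                  (concat_word (power_word u (Restr \<alpha> {b. (a,b) \<in> \<alpha>})) V)"
  shows "lex_le (concat_word (power_word u \<alpha>) V) (suffix_from (concat_word (power_word u \<alpha>) V) (Inl q))"
proof -
  let ?U = "power_word u \<alpha>"
  let ?w = "concat_word ?U V"
  obtain a i where ai: "q = (a,i)" "a \<in> Field \<alpha>" "i \<in> pos u" using q pos_power_word[OF wu wa] by auto
  let ?S = "suffix_from u i" and ?R = "power_word u (Restr \<alpha> {b. (a,b) \<in> \<alpha> \<and> b \<noteq> a})"
  let ?Pa = "power_word u (Restr \<alpha> {b. (a,b) \<in> \<alpha>})"
  have wU: "is_word ?U" and ww: "is_word ?w" using is_word_power[OF wu wa] is_word_concat wV by blast+
  have wS: "is_word ?S" and wZ: "is_word (suffix_from ?w (Inl q))" using is_word_restrict wu ww by blast+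
  have wR: "is_word ?R" and wPa: "is_word ?Pa" using is_word_power[OF wu Well_order_Restr[OF wa]] by blast+
  have wSR: "is_word (concat_word ?S ?R)" by (rule is_word_concat[OF wS wR])
  have wSRV: "is_word (concat_word (concat_word ?S ?R) V)" by (rule is_word_concat[OF wSR wV])
  have Ziso: "word_iso (concat_word (concat_word ?S ?R) V) (suffix_from ?w (Inl q))"
    using word_iso_sym[OF suffix_from_concat_power_word_Inl[OF wu wa wV ai(2,3)]] ai(1) by simp
  consider "str_less u ?S" | "is_prefix u ?S"
    using prime_word_lex_le_suffix_from[OF wu pu ai(3)] unfolding lex_le_def by blast
  then show ?thesis
  proof cases
    case 1
    obtain a0 where a0: "a0 \<in> Field \<alpha>" "\<And>b. b \<in> Field \<alpha> \<Longrightarrow> (a0,b) \<in> \<alpha>"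
      using Well_order_least[OF wa subset_refl] ai(2) by blast
    have uw: "is_prefix u ?w"
      by (rule is_prefix_trans[OF wU ww is_prefix_power_word[OF wu wa a0] is_prefix_concat_word[OF wU wV]])
    have "is_prefix ?S (concat_word (concat_word ?S ?R) V)"
      by (rule is_prefix_trans[OF wSR wSRV is_prefix_concat_word[OF wS wR] is_prefix_concat_word[OF wSR wV]])
    then have "is_prefix ?S (suffix_from ?w (Inl q))" by (rule is_prefix_iso_right[OF wSRV wZ _ Ziso])
    then have "str_less ?w (suffix_from ?w (Inl q))" by (rule str_less_is_prefix_mono[OF wu wS ww wZ 1 uw])
    then show ?thesis unfolding lex_le_def by blast
  next
    case 2
    then have "word_iso u ?S" by (rule is_prefix_suffix_from_imp_iso[OF wu ai(3)])
    then have "word_iso (concat_word ?S ?R) (concat_word u ?R)"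
      by (rule concat_word_cong[OF wS wu wR wR word_iso_sym word_iso_refl])
    then have "word_iso (concat_word ?S ?R) ?Pa" using power_word_unfold[OF wu wa ai(2)] word_iso_trans by blast
    then have "word_iso (concat_word ?Pa V) (suffix_from ?w (Inl q))"
      using concat_word_cong[OF wSR wPa wV wV _ word_iso_refl] Ziso word_iso_sym word_iso_trans by blast
    then show ?thesis
      by (rule lex_le_iso_right[OF ww is_word_concat[OF wPa wV] wZ _ final[OF ai(2)]])
  qed
qed

lemma prime_word_concat_wordI:
  assumes wU: "is_word U" and wV: "is_word V" and nV: "pos V \<noteq> {}"
    and left: "\<And>q. q \<in> pos U \<Longrightarrow> lex_le (concat_word U V) (suffix_from (concat_word U V) (Inl q))"
    and right: "\<And>q. q \<in> pos V \<Longrightarrow> str_less (concat_word U V) (suffix_from (concat_word U V) (Inr q))"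
  shows "prime_word (concat_word U V)"
proof -
  let ?w = "concat_word U V"
  have ww: "is_word ?w" by (rule is_word_concat[OF wU wV])
  obtain q0 where q0: "q0 \<in> pos V" using nV by blast
  show ?thesis
  proof (rule prime_wordI[OF ww _ _ str_less_imp_not_is_prefix[OF ww is_word_restrict[OF ww]]])
    show "Inr q0 \<in> pos ?w" using pos_concat_word[OF wU wV] q0 by simp
  next
    fix p assume "p \<in> pos ?w"
    then consider q where "p = Inl q" "q \<in> pos U" | q where "p = Inr q" "q \<in> pos V"
      using pos_concat_word[OF wU wV] by blast
    then show "lex_le ?w (suffix_from ?w p)"
      by cases (use left right in \<open>auto simp: lex_le_def\<close>)
  next
    fix p assume "(Inr q0, p) \<in> fst ?w"
    then obtain q where "p = Inr q" "q \<in> pos V" by (cases p) (auto intro: FieldI2)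
    then show "str_less ?w (suffix_from ?w p)" using right by simp
  qed
qed

theorem mainTheorem11:
  fixes u :: "('p, 'a::{finite,linorder}) word" and v :: "('q, 'a) word"
    and \<alpha> :: "'r rel" and \<beta> :: "'s rel"
  assumes "is_word u" and "countable (Field (fst u))"
    and "is_word v" and "countable (Field (fst v))"
    and "prime_word u" and "prime_word v" and "lex_less u v"
    and "Well_order \<alpha>" and "countable (Field \<alpha>)"
    and "lex_less (concat_word (power_word u \<alpha>) v) v"
    and "Well_order \<beta>" and "countable (Field \<beta>)" and "Field \<beta> \<noteq> {}"
  shows "prime_word (concat_word (power_word u \<alpha>) (power_word v \<beta>))"
proof -
  note wu = assms(1) and wv = assms(3) and pu = assms(5) and pv = assms(6) and wa = assms(8)
    and wb = assms(11) and nb = assms(13)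
  let ?U = "power_word u \<alpha>" and ?V = "power_word v \<beta>"
  have wU: "is_word ?U" by (rule is_word_power[OF wu wa])
  have wV: "is_word ?V" by (rule is_word_power[OF wv wb])
  have less: "str_less (concat_word ?U v) v"
    by (rule lex_less_concat_word_imp_str_less[OF wU wv prime_word_nonempty[OF pv] assms(10)])
  obtain b0 where b0: "b0 \<in> Field \<beta>" "\<And>b. b \<in> Field \<beta> \<Longrightarrow> (b0,b) \<in> \<beta>"
    using Well_order_least[OF wb subset_refl nb] by blast
  show ?thesis
  proof (rule prime_word_concat_wordI[OF wU wV])
    show "pos ?V \<noteq> {}" using pos_power_word[OF wv wb] nb prime_word_nonempty[OF pv] by simp
  next
    fix q assume "q \<in> pos ?U"
    then show "lex_le (concat_word ?U ?V) (suffix_from (concat_word ?U ?V) (Inl q))"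
      by (rule lex_le_suffix_from_concat_word_Inl[OF wu pu wa wV _
            lex_le_concat_power_word_final_segment[OF wu wa wV _
              power_word_final_segment_concat_lex_le[OF wu wa wv pv wb nb less]]])
  next
    fix q assume q: "q \<in> pos ?V"
    show "str_less (concat_word ?U ?V) (suffix_from (concat_word ?U ?V) (Inr q))"
      by (rule str_less_suffix_from_concat_word_Inr[OF wU wv wV less is_prefix_power_word[OF wv wb b0] q
            lex_le_suffix_from_power_word[OF wv pv wb q]])
  qed
qed

end
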